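(* Let $G=GL(\infty,F_2)\ltimes F_2^\infty$ and let $\mathcal M\subseteq L(G)$ be a $G$-invariant von Neumann subalgebra. Then either $L(F_2^\infty)\subseteq\mathcal M$ or $\mathcal M\cap L(F_2^\infty)=\mathbb C1$.
   Context: For a countable discrete group $G$, $L(G)$ is the group von Neumann algebra generated by the left regular unitaries $u_g$ on $\ell^2(G)$; for a subgroup $N$, $L(N)$ is the von Neumann subalgebra generated by $\{u_g:g\in N\}$. A von Neumann subalgebra $\mathcal M\subseteq L(G)$ is $G$-invariant if $u_g\mathcal M u_g^*\subseteq\mathcal M$ for all $g\in G$. $F_2$ is the field with two elements and $F_2^\infty=\bigoplus_{\mathbb N}F_2$ is the space of finitely supported column vectors, regarded as an abelian group under addition. $GL(\infty,F_2)$ is the group of invertible $\mathbb N\times\mathbb N$ matrices $M$ over $F_2$ with $M_{ij}\neq\delta_{ij}$ for only finitely many $(i,j)$, acting on $F_2^\infty$ by matrix multiplication. $G=GL(\infty,F_2)\ltimes F_2^\infty$ is the semidirect product with $gvg^{-1}=g(v)$. *)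

theory Defs
  imports "HOL-Algebra.Group" "HOL-Analysis.Infinite_Sum"
begin

text \<open>Elements of F_2 are booleans (True = 1), addition is exclusive or.
  Matrices are functions nat => nat => bool, column vectors nat => bool.\<close>

type_synonym mat2 = "nat \<Rightarrow> nat \<Rightarrow> bool"
type_synonym vec2 = "nat \<Rightarrow> bool"

definition idm :: mat2 where "idm i j \<longleftrightarrow> i = j"

definition finitary :: "mat2 \<Rightarrow> bool" where
  "finitary M \<longleftrightarrow> finite {(i, j). M i j \<noteq> (i = j)}"

definition mmul :: "mat2 \<Rightarrow> mat2 \<Rightarrow> mat2" where
  "mmul M N i j \<longleftrightarrow> odd (card {k. M i k \<and> N k j})"

definition mvec :: "mat2 \<Rightarrow> vec2 \<Rightarrow> vec2" where
  "mvec M v i \<longleftrightarrow> odd (card {k. M i k \<and> v k})"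

definition vadd :: "vec2 \<Rightarrow> vec2 \<Rightarrow> vec2" where
  "vadd v w i \<longleftrightarrow> v i \<noteq> w i"

definition GLinf :: "mat2 set" where
  "GLinf = {M. finitary M \<and> (\<exists>N. finitary N \<and> mmul M N = idm \<and> mmul N M = idm)}"

definition Finf :: "vec2 set" where
  "Finf = {v. finite {i. v i}}"

text \<open>The pair (g, v) stands for the element v g of the semidirect product
  (v in F_2^infinity, g in GL(infinity,F_2)), so that g v g^-1 = g(v) gives
  (v g)(w h) = (v + g(w)) (g h).\<close>

definition Gsd :: "(mat2 \<times> vec2) monoid" where
  "Gsd = \<lparr> carrier = GLinf \<times> Finf,
           monoid.mult = (\<lambda>(g, v) (h, w). (mmul g h, vadd v (mvec g w))),
           monoid.one = (idm, (\<lambda>_. False)) \<rparr>"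

definition Nsd :: "(mat2 \<times> vec2) set" where
  "Nsd = {(idm, v) | v. v \<in> Finf}"

definition l2 :: "'a set \<Rightarrow> ('a \<Rightarrow> complex) set" where
  "l2 X = {f. (\<forall>x. x \<notin> X \<longrightarrow> f x = 0) \<and> (\<lambda>x. (cmod (f x))\<^sup>2) summable_on UNIV}"

definition l2_inner :: "('a \<Rightarrow> complex) \<Rightarrow> ('a \<Rightarrow> complex) \<Rightarrow> complex" where
  "l2_inner f g = (\<Sum>\<^sub>\<infinity>x. f x * cnj (g x))"

definition l2_norm :: "('a \<Rightarrow> complex) \<Rightarrow> real" where
  "l2_norm f = sqrt (\<Sum>\<^sub>\<infinity>x. (cmod (f x))\<^sup>2)"

type_synonym 'a op = "('a \<Rightarrow> complex) \<Rightarrow> ('a \<Rightarrow> complex)"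

text \<open>Bounded linear operators on l^2(X); as a canonical representative an operator
  is required to send every function outside l^2(X) to 0.\<close>
definition bop :: "'a set \<Rightarrow> 'a op set" where
  "bop X = {T. (\<forall>f\<in>l2 X. T f \<in> l2 X) \<and> (\<forall>f. f \<notin> l2 X \<longrightarrow> T f = (\<lambda>_. 0))
     \<and> (\<forall>f\<in>l2 X. \<forall>g\<in>l2 X. T (\<lambda>x. f x + g x) = (\<lambda>x. T f x + T g x))
     \<and> (\<forall>f\<in>l2 X. \<forall>c. T (\<lambda>x. c * f x) = (\<lambda>x. c * T f x))
     \<and> (\<exists>C. \<forall>f\<in>l2 X. l2_norm (T f) \<le> C * l2_norm f)}"

definition idop :: "'a set \<Rightarrow> 'a op" where
  "idop X f = (if f \<in> l2 X then f else (\<lambda>_. 0))"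

definition op_add :: "'a op \<Rightarrow> 'a op \<Rightarrow> 'a op" where
  "op_add T S f = (\<lambda>x. T f x + S f x)"

definition op_scale :: "complex \<Rightarrow> 'a op \<Rightarrow> 'a op" where
  "op_scale c T f = (\<lambda>x. c * T f x)"

definition is_adjoint :: "'a set \<Rightarrow> 'a op \<Rightarrow> 'a op \<Rightarrow> bool" where
  "is_adjoint X T S \<longleftrightarrow> (\<forall>f\<in>l2 X. \<forall>g\<in>l2 X. l2_inner (T f) g = l2_inner f (S g))"

definition wot_closed :: "'a set \<Rightarrow> 'a op set \<Rightarrow> bool" where
  "wot_closed X M \<longleftrightarrow>
     (\<forall>T\<in>bop X.
        (\<forall>F. finite F \<longrightarrow> F \<subseteq> l2 X \<times> l2 X \<longrightarrow> (\<forall>\<epsilon>>0. \<exists>S\<in>M.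
            \<forall>(f, g)\<in>F. cmod (l2_inner (\<lambda>x. T f x - S f x) g) < \<epsilon>))
        \<longrightarrow> T \<in> M)"

definition vNa :: "'a set \<Rightarrow> 'a op set \<Rightarrow> bool" where
  "vNa X M \<longleftrightarrow> M \<subseteq> bop X \<and> idop X \<in> M
     \<and> (\<forall>T\<in>M. \<forall>S\<in>M. op_add T S \<in> M)
     \<and> (\<forall>T\<in>M. \<forall>c. op_scale c T \<in> M)
     \<and> (\<forall>T\<in>M. \<forall>S\<in>M. T \<circ> S \<in> M)
     \<and> (\<forall>T\<in>M. \<exists>S\<in>M. is_adjoint X T S)
     \<and> wot_closed X M"

definition vN_gen :: "'a set \<Rightarrow> 'a op set \<Rightarrow> 'a op set" where
  "vN_gen X S = \<Inter>{M. vNa X M \<and> S \<subseteq> M}"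

definition lreg :: "('g, 'b) monoid_scheme \<Rightarrow> 'g \<Rightarrow> 'g op" where
  "lreg G g f = (if f \<in> l2 (carrier G)
      then (\<lambda>h. if h \<in> carrier G then f (inv\<^bsub>G\<^esub> g \<otimes>\<^bsub>G\<^esub> h) else 0) else (\<lambda>_. 0))"

text \<open>L(N) inside B(l^2(G)) for a subgroup N of G; L(G) is groupVN G (carrier G).\<close>
definition groupVN :: "('g, 'b) monoid_scheme \<Rightarrow> 'g set \<Rightarrow> 'g op set" where
  "groupVN G N = vN_gen (carrier G) (lreg G ` N)"

definition G_invariant :: "('g, 'b) monoid_scheme \<Rightarrow> 'g op set \<Rightarrow> bool" where
  "G_invariant G M \<longleftrightarrow> (\<forall>g\<in>carrier G. \<forall>T\<in>M. \<forall>S\<in>bop (carrier G).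
      is_adjoint (carrier G) (lreg G g) S \<longrightarrow> lreg G g \<circ> T \<circ> S \<in> M)"

definition scalars :: "'a set \<Rightarrow> 'a op set" where
  "scalars X = range (\<lambda>c. op_scale c (idop X))"

end

(* If x is a non-scalar element of M \<inter> L(N), N = F_2^infinity, some Fourier coefficient x(v) with
   v \<noteq> 0 is nonzero. For every D there are involutions h_{D,i} (i \<in> nat) of GL(infinity, F_2)
   fixing v that move every other vector supported below D to pairwise distinct vectors, acting on
   disjoint blocks of coordinates. Let z be x with its coefficients at 1 and at v removed. On every
   conjugation orbit the coefficients of z are either all 0 or an l2 sequence along distinct points,
   so by Cauchy-Schwarz the averages of h z h^-1 over i < K tend weakly to 0. Hence u_v is the weak
   limit of averages of conjugates of (x - x(1)) / x(v), and lies in M. Since GL(infinity, F_2) acts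
   transitively on nonzero vectors (already through involutive transvections), G-invariance yields
   u_w \<in> M for all w \<in> N, i.e. L(N) \<subseteq> M. *)

theory Submission
  imports Defs "HOL-Analysis.Convex" "HOL-Analysis.Elementary_Normed_Spaces"
begin

section \<open>Matrices over F_2\<close>

definition dot2 :: "vec2 \<Rightarrow> vec2 \<Rightarrow> bool" where
  "dot2 p u \<longleftrightarrow> odd (card {k. p k \<and> u k})"

lemma mvec_eq_dot2: "mvec M u i = dot2 (M i) u"
  by (simp add: mvec_def dot2_def)

lemma mmul_eq_mvec_col: "mmul M N i j = mvec M (\<lambda>k. N k j) i"
  by (simp add: mmul_def mvec_def)

lemma odd_card_symdiff:
  assumes "finite A" "finite B"
  shows "odd (card {k. (k \<in> A) \<noteq> (k \<in> B)}) \<longleftrightarrow> (odd (card A) \<noteq> odd (card B))"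
proof -
  have e: "{k. (k \<in> A) \<noteq> (k \<in> B)} = (A - B) \<union> (B - A)" by auto
  have c1: "card ((A - B) \<union> (B - A)) = card (A - B) + card (B - A)"
    by (rule card_Un_disjoint) (use assms in auto)
  have c2: "card A = card (A - B) + card (A \<inter> B)"
  proof -
    have "A = (A - B) \<union> (A \<inter> B)" by auto
    then have "card A = card ((A - B) \<union> (A \<inter> B))" by simp
    also have "\<dots> = card (A - B) + card (A \<inter> B)"
      by (rule card_Un_disjoint) (use assms in auto)
    finally show ?thesis .
  qed
  have c3: "card B = card (B - A) + card (A \<inter> B)"
  proof -
    have "B = (B - A) \<union> (A \<inter> B)" by auto
    then have "card B = card ((B - A) \<union> (A \<inter> B))" by simp
    also have "\<dots> = card (B - A) + card (A \<inter> B)"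
      by (rule card_Un_disjoint) (use assms in auto)
    finally show ?thesis .
  qed
  show ?thesis unfolding e c1 using c2 c3 by presburger
qed

lemma dot2_xor_left:
  assumes "finite {k. P k}" "finite {k. Q k}"
  shows "dot2 (\<lambda>k. P k \<noteq> Q k) u = (dot2 P u \<noteq> dot2 Q u)"
proof -
  have "{k. (P k \<noteq> Q k) \<and> u k} = {k. (k \<in> {k. P k \<and> u k}) \<noteq> (k \<in> {k. Q k \<and> u k})}" by auto
  moreover have "finite {k. P k \<and> u k}" "finite {k. Q k \<and> u k}"
    using assms by (auto intro: finite_subset)
  ultimately show ?thesis unfolding dot2_def using odd_card_symdiff[of "{k. P k \<and> u k}" "{k. Q k \<and> u k}"]
    by simp
qed

lemma dot2_xor_right:
  assumes "finite {k. p k}"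
  shows "dot2 p (\<lambda>k. u k \<noteq> w k) = (dot2 p u \<noteq> dot2 p w)"
proof -
  have "{k. p k \<and> (u k \<noteq> w k)} = {k. (k \<in> {k. p k \<and> u k}) \<noteq> (k \<in> {k. p k \<and> w k})}" by auto
  moreover have "finite {k. p k \<and> u k}" "finite {k. p k \<and> w k}"
    using assms by (auto intro: finite_subset)
  ultimately show ?thesis unfolding dot2_def using odd_card_symdiff[of "{k. p k \<and> u k}" "{k. p k \<and> w k}"]
    by simp
qed

lemma dot2_unit_left[simp]: "dot2 (\<lambda>k. k = t) u = u t"
proof -
  have "{k. k = t \<and> u k} = (if u t then {t} else {})" by auto
  then show ?thesis by (simp add: dot2_def)
qed

lemma dot2_unit_left'[simp]: "dot2 (\<lambda>k. t = k) u = u t"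
  using dot2_unit_left[of t u] by (simp add: eq_commute)

lemma dot2_zero_left[simp]: "dot2 (\<lambda>k. False) u = False"
  by (simp add: dot2_def)

lemma dot2_and_const_right: "dot2 p (\<lambda>k. a k \<and> s) = (s \<and> dot2 p a)"
  by (cases s) (simp_all add: dot2_def)

lemma dot2_zero_right[simp]: "dot2 p (\<lambda>k. False) = False"
  by (simp add: dot2_def)

definition row_finite :: "mat2 \<Rightarrow> bool" where
  "row_finite M \<longleftrightarrow> (\<forall>i. finite {k. M i k})"

definition id_outside :: "mat2 \<Rightarrow> nat \<Rightarrow> bool" where
  "id_outside M n \<longleftrightarrow> (\<forall>i j. M i j \<noteq> (i = j) \<longrightarrow> i < n \<and> j < n)"

lemma finitary_iff_id_outside: "finitary M \<longleftrightarrow> (\<exists>n. id_outside M n)"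
proof
  assume "finitary M"
  then have f: "finite {(i, j). M i j \<noteq> (i = j)}" by (simp add: finitary_def)
  let ?S = "fst ` {(i, j). M i j \<noteq> (i = j)} \<union> snd ` {(i, j). M i j \<noteq> (i = j)}"
  have "finite ?S" using f by (simp add: finite_imageI)
  then have "\<exists>m. \<forall>x\<in>?S. x < m" by (simp only: finite_nat_set_iff_bounded)
  then obtain n where n0: "\<forall>x\<in>?S. x < n" by (elim exE)
  have n: "x < n" if "x \<in> ?S" for x using n0 that by (rule bspec)
  have "id_outside M n" unfolding id_outside_def
  proof (intro allI impI)
    fix i j assume "M i j \<noteq> (i = j)"
    then have "(i, j) \<in> {(i, j). M i j \<noteq> (i = j)}" by simp
    then have "fst (i, j) \<in> ?S" "snd (i, j) \<in> ?S" by (rule UnI1[OF imageI], rule UnI2[OF imageI])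
    then have "i \<in> ?S" "j \<in> ?S" by simp_all
    then show "i < n \<and> j < n" using n by blast
  qed
  then show "\<exists>n. id_outside M n" by blast
next
  assume "\<exists>n. id_outside M n"
  then obtain n where "id_outside M n" by blast
  have "{(i, j). M i j \<noteq> (i = j)} \<subseteq> {..<n} \<times> {..<n}"
  proof (rule subsetI)
    fix p assume "p \<in> {(i, j). M i j \<noteq> (i = j)}"
    then have "M (fst p) (snd p) \<noteq> (fst p = snd p)" by (simp add: case_prod_beta)
    then have "fst p < n \<and> snd p < n" using \<open>id_outside M n\<close> unfolding id_outside_def by blast
    then show "p \<in> {..<n} \<times> {..<n}" by (simp add: mem_Times_iff)
  qed
  moreover have "finite ({..<n} \<times> {..<n})" by simp
  ultimately show "finitary M" unfolding finitary_def
    by (rule finite_subset)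
qed

lemma id_outside_row: assumes "id_outside M n" "i \<ge> n" shows "M i k = (k = i)"
proof (rule ccontr)
  assume "M i k \<noteq> (k = i)"
  then have "M i k \<noteq> (i = k)" by auto
  then have "i < n" using assms(1) unfolding id_outside_def by blast
  then show False using assms(2) by simp
qed

lemma id_outside_col: assumes "id_outside M n" "j \<ge> n" shows "M k j = (k = j)"
proof (rule ccontr)
  assume "M k j \<noteq> (k = j)"
  then have "j < n" using assms(1) unfolding id_outside_def by blast
  then show False using assms(2) by simp
qed

lemma id_outside_mono: "id_outside M n \<Longrightarrow> n \<le> m \<Longrightarrow> id_outside M m"
  unfolding id_outside_def by force

lemma finitary_row_finite: assumes "finitary M" shows "row_finite M"
proof -
  obtain n where b: "id_outside M n" using assms finitary_iff_id_outside by blast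
  have "{k. M i k} \<subseteq> insert i {..<n}" for i
  proof
    fix k assume k: "k \<in> {k. M i k}"
    show "k \<in> insert i {..<n}"
    proof (cases "k < n")
      case False
      then have "M i k = (i = k)" using id_outside_col[OF b, of k i] by simp
      then show ?thesis using k by simp
    qed simp
  qed
  moreover have "finite (insert i {..<n})" for i by simp
  ultimately show ?thesis unfolding row_finite_def using finite_subset by blast
qed

lemma odd_card_iff_odd_fibres:
  assumes "finite P"
  shows "odd (card P) \<longleftrightarrow> odd (card {k. odd (card {m. (k, m) \<in> P})})"
proof -
  let ?K = "fst ` P"
  have fin: "finite ?K" using assms by auto
  have finB: "\<forall>a\<in>?K. finite {m. (a, m) \<in> P}"
  proof
    fix a assume "a \<in> ?K"
    have "{m. (a, m) \<in> P} \<subseteq> snd ` P" by force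
    then show "finite {m. (a, m) \<in> P}" using assms by (meson finite_imageI finite_subset)
  qed
  have "P = Sigma ?K (\<lambda>a. {m. (a, m) \<in> P})" by force
  then have "card P = (\<Sum>a\<in>?K. card {m. (a, m) \<in> P})"
    using card_SigmaI[OF fin finB] by simp
  moreover have "{k. odd (card {m. (k, m) \<in> P})} = {a\<in>?K. odd (card {m. (a, m) \<in> P})}"
  proof -
    have "x \<in> ?K" if "odd (card {m. (x, m) \<in> P})" for x
    proof -
      have "{m. (x, m) \<in> P} \<noteq> {}" using that by (intro notI) simp
      then obtain m where "(x, m) \<in> P" by blast
      then show ?thesis by (rule image_eqI[rotated]) simp
    qed
    then show ?thesis by blast
  qed
  ultimately show ?thesis by (simp add: even_sum_iff[OF fin])
qed

lemma mvec_mvec: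
  assumes "row_finite g" "row_finite h"
  shows "mvec g (mvec h u) = mvec (mmul g h) u"
proof
  fix i
  let ?P = "{(k, m). g i k \<and> h k m \<and> u m}"
  have sub: "?P \<subseteq> Sigma {k. g i k} (\<lambda>k. {m. h k m})" by auto
  have finP: "finite ?P"
    by (rule finite_subset[OF sub]) (use assms in \<open>auto simp: row_finite_def\<close>)
  have l: "mvec g (mvec h u) i \<longleftrightarrow> odd (card ?P)"
  proof -
    have "{m. (k, m) \<in> ?P} = (if g i k then {m. h k m \<and> u m} else {})" for k by auto
    then have "{k. odd (card {m. (k, m) \<in> ?P})} = {k. g i k \<and> mvec h u k}"
      by (auto simp: mvec_def)
    then show ?thesis using odd_card_iff_odd_fibres[OF finP] by (simp add: mvec_def)
  qed
  let ?Q = "{(m, k). g i k \<and> h k m \<and> u m}"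
  have "?Q = (\<lambda>(k, m). (m, k)) ` ?P" by auto
  then have cq: "card ?Q = card ?P"
    by (simp add: card_image inj_on_def)
  have finQ: "finite ?Q" using finP \<open>?Q = _\<close> by simp
  have r: "mvec (mmul g h) u i \<longleftrightarrow> odd (card ?Q)"
  proof -
    have "{k. (m, k) \<in> ?Q} = (if u m then {k. g i k \<and> h k m} else {})" for m by auto
    then have "{m. odd (card {k. (m, k) \<in> ?Q})} = {m. mmul g h i m \<and> u m}"
      by (auto simp: mmul_def)
    then show ?thesis using odd_card_iff_odd_fibres[OF finQ] by (simp add: mvec_def)
  qed
  show "mvec g (mvec h u) i = mvec (mmul g h) u i" using l r cq by simp
qed

lemma mmul_assoc:
  assumes "row_finite g" "row_finite h"
  shows "mmul (mmul g h) l = mmul g (mmul h l)"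
proof (intro ext)
  fix i j
  have "mmul (mmul g h) l i j = mvec (mmul g h) (\<lambda>k. l k j) i" by (simp add: mmul_eq_mvec_col)
  also have "\<dots> = mvec g (mvec h (\<lambda>k. l k j)) i" using mvec_mvec[OF assms] by simp
  also have "\<dots> = mmul g (mmul h l) i j" by (simp add: mmul_eq_mvec_col mvec_def)
  finally show "mmul (mmul g h) l i j = mmul g (mmul h l) i j" .
qed

lemma dot2_unit_right: "dot2 p (\<lambda>k. k = j) = p j"
proof -
  have "{k. p k \<and> k = j} = (if p j then {j} else {})" by auto
  then show ?thesis by (simp add: dot2_def)
qed

lemma idm_row: "idm i = (\<lambda>k. i = k)"
  by (rule ext) (simp add: idm_def)

lemma idm_col: "(\<lambda>k. idm k j) = (\<lambda>k. k = j)"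
  by (rule ext) (simp add: idm_def)

lemma vadd_eq: "vadd u w = (\<lambda>i. u i \<noteq> w i)"
  by (rule ext) (simp add: vadd_def)

lemma id_outside_row_eq: "id_outside M n \<Longrightarrow> n \<le> i \<Longrightarrow> M i = (\<lambda>k. k = i)"
  by (rule ext) (rule id_outside_row)

lemma GLinf_finitary: "g \<in> GLinf \<Longrightarrow> finitary g"
  by (simp add: GLinf_def)

lemma mvec_idm[simp]: "mvec idm u = u"
  by (rule ext) (simp add: mvec_eq_dot2 idm_row)

lemma mmul_idm_left[simp]: "mmul idm M = M"
  by (intro ext) (simp add: mmul_eq_mvec_col)

lemma mmul_idm_right[simp]: "mmul M idm = M"
  by (intro ext) (simp add: mmul_eq_mvec_col mvec_eq_dot2 idm_col dot2_unit_right)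

lemma mvec_zero[simp]: "mvec M (\<lambda>_. False) = (\<lambda>_. False)"
  by (rule ext) (simp add: mvec_eq_dot2)

lemma mvec_vadd:
  assumes "row_finite M" shows "mvec M (vadd u w) = vadd (mvec M u) (mvec M w)"
  using assms unfolding row_finite_def by (intro ext) (simp only: mvec_eq_dot2 vadd_eq, rule dot2_xor_right, blast)

lemma vadd_zero_left[simp]: "vadd (\<lambda>_. False) u = u"
  by (simp add: vadd_eq)
lemma vadd_zero_right[simp]: "vadd u (\<lambda>_. False) = u"
  by (simp add: vadd_eq)
lemma vadd_self[simp]: "vadd u u = (\<lambda>_. False)"
  by (simp add: vadd_eq)
lemma vadd_assoc: "vadd (vadd u v) w = vadd u (vadd v w)"
  unfolding vadd_eq by (rule ext) blast

lemma id_outside_mmul: "id_outside g n \<Longrightarrow> id_outside h n \<Longrightarrow> id_outside (mmul g h) n"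
proof -
  assume g: "id_outside g n" and h: "id_outside h n"
  have "mmul g h i j = (i = j)" if "\<not> (i < n \<and> j < n)" for i j
  proof (cases "i < n")
    case False
    then have "mmul g h i j = mvec g (\<lambda>k. h k j) i" by (simp add: mmul_eq_mvec_col)
    also have "\<dots> = h i j" using id_outside_row_eq[OF g, of i] False by (simp add: mvec_eq_dot2)
    finally show ?thesis using id_outside_row[OF h, of i j] False by (simp add: eq_commute)
  next
    case True
    then have jn: "j \<ge> n" using that by simp
    have "mmul g h i j = dot2 (g i) (\<lambda>k. k = j)" by (simp add: mmul_eq_mvec_col mvec_eq_dot2 id_outside_col[OF h jn])
    also have "\<dots> = g i j" by (rule dot2_unit_right)
    finally show ?thesis using id_outside_col[OF g jn] by simp
  qed
  then show ?thesis unfolding id_outside_def by blast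
qed

lemma finitary_mmul: "finitary g \<Longrightarrow> finitary h \<Longrightarrow> finitary (mmul g h)"
  unfolding finitary_iff_id_outside by (metis id_outside_mmul id_outside_mono max.cobounded1 max.cobounded2)

lemma mvec_Finf:
  assumes "finitary g" "u \<in> Finf" shows "mvec g u \<in> Finf"
proof -
  obtain n where b: "id_outside g n" using assms finitary_iff_id_outside by blast
  have "{i. mvec g u i} \<subseteq> {..<n} \<union> {i. u i}"
  proof
    fix i assume "i \<in> {i. mvec g u i}"
    then show "i \<in> {..<n} \<union> {i. u i}"
      using id_outside_row_eq[OF b, of i] by (cases "i < n") (simp_all add: mvec_eq_dot2)
  qed
  moreover have "finite ({..<n} \<union> {i. u i})" using assms by (simp add: Finf_def)
  ultimately have "finite {i. mvec g u i}" by (rule finite_subset)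
  then show ?thesis by (simp add: Finf_def)
qed

lemma vadd_Finf: assumes "u \<in> Finf" "w \<in> Finf" shows "vadd u w \<in> Finf"
proof -
  have "{i. vadd u w i} \<subseteq> {i. u i} \<union> {i. w i}" by (auto simp: vadd_def)
  moreover have "finite ({i. u i} \<union> {i. w i})" using assms by (simp add: Finf_def)
  ultimately have "finite {i. vadd u w i}" by (rule finite_subset)
  then show ?thesis by (simp add: Finf_def)
qed

lemma mmul_GLinf: "g \<in> GLinf \<Longrightarrow> h \<in> GLinf \<Longrightarrow> mmul g h \<in> GLinf"
proof -
  assume g: "g \<in> GLinf" and h: "h \<in> GLinf"
  then obtain G H where G: "finitary G" "mmul g G = idm" "mmul G g = idm"
    and H: "finitary H" "mmul h H = idm" "mmul H h = idm" unfolding GLinf_def by blast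
  have rf: "row_finite g" "row_finite h" "row_finite G" "row_finite H" using g h G H finitary_row_finite
    unfolding GLinf_def by auto
  have "mmul (mmul g h) (mmul H G) = idm"
    using rf by (simp add: mmul_assoc finitary_row_finite H G flip: mmul_assoc[of h H G])
  moreover have "mmul (mmul H G) (mmul g h) = idm"
    using rf by (simp add: mmul_assoc finitary_row_finite H G flip: mmul_assoc[of G g h])
  ultimately show ?thesis using g h G H finitary_mmul unfolding GLinf_def by blast
qed

lemma idm_GLinf: "idm \<in> GLinf"
proof -
  have "finitary idm" unfolding finitary_def idm_def by simp
  then show ?thesis unfolding GLinf_def by auto
qed

section \<open>The semidirect product\<close>

lemma Gsd_mult: "(g, v) \<otimes>\<^bsub>Gsd\<^esub> (h, w) = (mmul g h, vadd v (mvec g w))"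
  by (simp add: Gsd_def)

lemma Gsd_one: "\<one>\<^bsub>Gsd\<^esub> = (idm, (\<lambda>_. False))"
  by (simp add: Gsd_def)

lemma Gsd_carrier: "carrier Gsd = GLinf \<times> Finf"
  by (simp add: Gsd_def)

lemma GLinf_row_finite: "g \<in> GLinf \<Longrightarrow> row_finite g"
  unfolding GLinf_def using finitary_row_finite by blast

lemma group_Gsd: "group Gsd"
proof (rule groupI)
  fix x y assume "x \<in> carrier Gsd" "y \<in> carrier Gsd"
  then show "x \<otimes>\<^bsub>Gsd\<^esub> y \<in> carrier Gsd"
    by (cases x, cases y) (auto simp: Gsd_mult Gsd_carrier mmul_GLinf vadd_Finf mvec_Finf GLinf_finitary)
next
  show "\<one>\<^bsub>Gsd\<^esub> \<in> carrier Gsd"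
    by (simp add: Gsd_one Gsd_carrier idm_GLinf Finf_def)
next
  fix x y z assume "x \<in> carrier Gsd" "y \<in> carrier Gsd" "z \<in> carrier Gsd"
  then show "x \<otimes>\<^bsub>Gsd\<^esub> y \<otimes>\<^bsub>Gsd\<^esub> z = x \<otimes>\<^bsub>Gsd\<^esub> (y \<otimes>\<^bsub>Gsd\<^esub> z)"
    by (cases x, cases y, cases z)
      (auto simp: Gsd_mult Gsd_carrier mmul_assoc GLinf_row_finite mvec_vadd vadd_assoc mvec_mvec)
next
  fix x assume "x \<in> carrier Gsd"
  then show "\<one>\<^bsub>Gsd\<^esub> \<otimes>\<^bsub>Gsd\<^esub> x = x"
    by (cases x) (simp add: Gsd_mult Gsd_one)
next
  fix x assume x: "x \<in> carrier Gsd"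
  obtain g v where xe: "x = (g, v)" by (cases x)
  with x have g: "g \<in> GLinf" and v: "v \<in> Finf" by (auto simp: Gsd_carrier)
  then obtain N where N: "finitary N" "mmul g N = idm" "mmul N g = idm" unfolding GLinf_def by blast
  have NG: "N \<in> GLinf" using N g unfolding GLinf_def by blast
  have "(N, mvec N v) \<otimes>\<^bsub>Gsd\<^esub> x = \<one>\<^bsub>Gsd\<^esub>"
    using N by (simp add: xe Gsd_mult Gsd_one)
  moreover have "(N, mvec N v) \<in> carrier Gsd" using NG v N mvec_Finf by (simp add: Gsd_carrier)
  ultimately show "\<exists>y\<in>carrier Gsd. y \<otimes>\<^bsub>Gsd\<^esub> x = \<one>\<^bsub>Gsd\<^esub>" by blast
qed

section \<open>Involutions of F_2^infinity\<close>

text \<open>On the block [D + s D, D + s D + D) the involution block_invol v r D s adds the first D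
  coordinates of u + u_r v. If v r holds and v vanishes from D on, it fixes v, and for any other
  nonzero w vanishing from D on the images of w under different blocks s are different.\<close>
definition block_invol :: "vec2 \<Rightarrow> nat \<Rightarrow> nat \<Rightarrow> nat \<Rightarrow> mat2" where
  "block_invol v r D s i j = (if D + s * D \<le> i \<and> i < D + s * D + D then
      ((i = j) \<noteq> ((j = i - (D + s * D)) \<noteq> (j = r \<and> v (i - (D + s * D))))) else (i = j))"

lemma xor_cancel: "((a \<noteq> b) \<noteq> b) = (a::bool)"
  by (cases a; cases b) simp_all

lemma finite_unit_xor: "finite {j. (j = t) \<noteq> (j = r \<and> b)}"
proof -
  have "{j. (j = t) \<noteq> (j = r \<and> b)} \<subseteq> {t, r}" by auto
  then show ?thesis by (rule finite_subset) simp
qed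

lemma dot2_unit_xor: "dot2 (\<lambda>j. (j = t) \<noteq> (j = r \<and> b)) u = (u t \<noteq> (u r \<and> b))"
proof -
  have "dot2 (\<lambda>j. (j = t) \<noteq> (j = r \<and> b)) u = (dot2 (\<lambda>j. j = t) u \<noteq> dot2 (\<lambda>j. j = r \<and> b) u)"
    by (rule dot2_xor_left) (simp_all add: finite_subset[of "{j. j = r \<and> b}" "{r}"])
  also have "dot2 (\<lambda>j. j = r \<and> b) u = (u r \<and> b)"
    by (cases b) simp_all
  finally show ?thesis by simp
qed

lemma mvec_block_invol:
  "mvec (block_invol v r D s) u i =
    (if D + s * D \<le> i \<and> i < D + s * D + D
     then (u i \<noteq> (u (i - (D + s * D)) \<noteq> (u r \<and> v (i - (D + s * D))))) else u i)"
proof (cases "D + s * D \<le> i \<and> i < D + s * D + D")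
  case True
  let ?t = "i - (D + s * D)"
  have row: "block_invol v r D s i = (\<lambda>j. (i = j) \<noteq> ((j = ?t) \<noteq> (j = r \<and> v ?t)))"
    by (rule ext) (simp only: block_invol_def if_P[OF True])
  have "mvec (block_invol v r D s) u i = (dot2 (\<lambda>j. i = j) u \<noteq> dot2 (\<lambda>j. (j = ?t) \<noteq> (j = r \<and> v ?t)) u)"
    unfolding mvec_eq_dot2 row by (rule dot2_xor_left[OF _ finite_unit_xor]) simp
  then show ?thesis unfolding if_P[OF True] by (simp only: dot2_unit_xor dot2_unit_left')
next
  case False
  have row: "block_invol v r D s i = (\<lambda>j. i = j)"
    by (rule ext) (simp only: block_invol_def if_not_P[OF False] if_False)
  show ?thesis unfolding if_not_P[OF False] unfolding mvec_eq_dot2 row by simp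
qed

lemma block_invol_id_outside: assumes "r < D" shows "id_outside (block_invol v r D s) (D + s * D + D)"
  unfolding id_outside_def
proof (intro allI impI)
  fix i j assume a: "block_invol v r D s i j \<noteq> (i = j)"
  have blk: "D + s * D \<le> i \<and> i < D + s * D + D"
  proof (rule ccontr)
    assume "\<not> ?thesis"
    then have "block_invol v r D s i j = (i = j)" by (simp only: block_invol_def if_not_P if_False)
    then show False using a by simp
  qed
  have "block_invol v r D s i j = ((i = j) \<noteq> ((j = i - (D + s * D)) \<noteq> (j = r \<and> v (i - (D + s * D)))))"
    by (simp only: block_invol_def if_P[OF blk])
  then have x: "(j = i - (D + s * D)) \<noteq> (j = r \<and> v (i - (D + s * D)))" using a by auto
  have "j = i - (D + s * D) \<or> j = r" using x by auto
  then have "j < D" using blk assms by auto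
  then show "i < D + s * D + D \<and> j < D + s * D + D" using blk by simp
qed

lemma block_invol_involutive: assumes r: "r < D"
  shows "mvec (block_invol v r D s) (mvec (block_invol v r D s) u) = u"
proof (rule ext)
  fix i
  let ?g = "block_invol v r D s"
  have lowD: "mvec ?g u t = u t" if "t < D" for t
    using that by (simp add: mvec_block_invol)
  show "mvec ?g (mvec ?g u) i = u i"
  proof (cases "D + s * D \<le> i \<and> i < D + s * D + D")
    case True
    let ?t = "i - (D + s * D)"
    have t: "?t < D" using True by arith
    have "mvec ?g (mvec ?g u) i = (mvec ?g u i \<noteq> (mvec ?g u ?t \<noteq> (mvec ?g u r \<and> v ?t)))"
      using True by (simp add: mvec_block_invol[of v r D s "mvec ?g u"])
    also have "\<dots> = (mvec ?g u i \<noteq> (u ?t \<noteq> (u r \<and> v ?t)))" using lowD[OF t] lowD[OF r] by simp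
    also have "mvec ?g u i = (u i \<noteq> (u ?t \<noteq> (u r \<and> v ?t)))" using True by (simp add: mvec_block_invol)
    finally show ?thesis by (simp only: xor_cancel)
  next
    case False
    have "mvec ?g w i = w i" for w by (simp only: mvec_block_invol if_not_P[OF False])
    then show ?thesis by simp
  qed
qed

lemma mvec_unit: "mvec M (\<lambda>k. k = j) i = M i j"
  by (simp add: mvec_eq_dot2 dot2_unit_right)

lemma involutive_mmul_self:
  assumes "\<And>u. mvec g (mvec g u) = u"
  shows "mmul g g = idm"
proof (intro ext)
  fix i j
  have "(\<lambda>k. g k j) = mvec g (\<lambda>k. k = j)" by (rule ext) (simp add: mvec_unit)
  then have "mmul g g i j = mvec g (mvec g (\<lambda>k. k = j)) i" by (simp add: mmul_eq_mvec_col)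
  also have "\<dots> = (i = j)" using assms by simp
  finally show "mmul g g i j = idm i j" by (simp add: idm_def)
qed

lemma involution_GLinf:
  assumes "finitary g" "mmul g g = idm" shows "g \<in> GLinf"
  using assms unfolding GLinf_def by blast

lemma block_invol_GLinf: assumes "r < D" shows "block_invol v r D s \<in> GLinf" "mmul (block_invol v r D s) (block_invol v r D s) = idm"
proof -
  show m: "mmul (block_invol v r D s) (block_invol v r D s) = idm" by (rule involutive_mmul_self) (rule block_invol_involutive[OF assms])
  have "finitary (block_invol v r D s)" unfolding finitary_iff_id_outside using block_invol_id_outside[OF assms] by blast
  then show "block_invol v r D s \<in> GLinf" using m by (rule involution_GLinf)
qed

lemma block_invol_fixes: assumes "v r" shows "mvec (block_invol v r D s) v = v"
  by (rule ext) (simp add: mvec_block_invol assms)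

lemma block_index_unique:
  fixes D s s' i :: nat
  assumes "D + s * D \<le> i" "i < D + s * D + D" "D + s' * D \<le> i" "i < D + s' * D + D"
  shows "s = s'"
proof (rule ccontr)
  assume ne: "s \<noteq> s'"
  show False
  proof (cases "s < s'")
    case True
    then have "Suc s * D \<le> s' * D" by (intro mult_le_mono1) simp
    then have "s * D + D \<le> s' * D" by simp
    then show False using assms by linarith
  next
    case False
    then have "s' < s" using ne by simp
    then have "Suc s' * D \<le> s * D" by (intro mult_le_mono1) simp
    then have "s' * D + D \<le> s * D" by simp
    then show False using assms by linarith
  qed
qed

lemma inj_block_invol:
  assumes r: "r < D" and vr: "v r" and vD: "\<And>t. t \<ge> D \<Longrightarrow> \<not> v t"
    and wD: "\<And>t. t \<ge> D \<Longrightarrow> \<not> w t" and w0: "w \<noteq> (\<lambda>_. False)" and wv: "w \<noteq> v"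
  shows "inj (\<lambda>s. mvec (block_invol v r D s) w)"
proof -
  obtain t where t: "t < D" "w t \<noteq> (w r \<and> v t)"
  proof (rule ccontr)
    assume "\<not> thesis"
    then have all: "\<And>t. t < D \<Longrightarrow> w t = (w r \<and> v t)" using that by blast
    show False
    proof (cases "w r")
      case True
      have "w = v"
      proof (rule ext)
        fix t show "w t = v t" using all[of t] True wD[of t] vD[of t] by (cases "t < D") auto
      qed
      then show False using wv by simp
    next
      case False
      have "w = (\<lambda>_. False)"
      proof (rule ext)
        fix t show "w t = False" using all[of t] False wD[of t] by (cases "t < D") auto
      qed
      then show False using w0 by simp
    qed
  qed
  show ?thesis
  proof (rule injI)
    fix s s' assume eq: "mvec (block_invol v r D s) w = mvec (block_invol v r D s') w"
    let ?i = "D + s * D + t"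
    have "mvec (block_invol v r D s) w ?i = True"
      using t wD[of ?i] by (simp add: mvec_block_invol)
    then have "mvec (block_invol v r D s') w ?i" using eq by simp
    moreover have "\<not> w ?i" using wD[of ?i] by simp
    ultimately have "D + s' * D \<le> ?i \<and> ?i < D + s' * D + D"
      by (simp add: mvec_block_invol split: if_splits)
    moreover have "D + s * D \<le> ?i" "?i < D + s * D + D" using t by simp_all
    ultimately show "s = s'" using block_index_unique by blast
  qed
qed

definition transvection :: "vec2 \<Rightarrow> vec2 \<Rightarrow> mat2" where
  "transvection a p i j \<longleftrightarrow> ((i = j) \<noteq> (a i \<and> p j))"

lemma mvec_transvection: assumes "finite {j. p j}"
  shows "mvec (transvection a p) u i = (u i \<noteq> (a i \<and> dot2 p u))"
proof (cases "a i")
  case True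
  have row: "transvection a p i = (\<lambda>j. (i = j) \<noteq> p j)"
    using True by (simp add: transvection_def fun_eq_iff)
  have "mvec (transvection a p) u i = (dot2 (\<lambda>j. i = j) u \<noteq> dot2 p u)"
    unfolding mvec_eq_dot2 row by (rule dot2_xor_left) (simp_all add: assms)
  then show ?thesis using True by simp
next
  case False
  have "transvection a p i = (\<lambda>j. i = j)" using False by (simp add: transvection_def fun_eq_iff)
  then show ?thesis using False by (simp add: mvec_eq_dot2)
qed

lemma transvection_involutive: assumes p: "finite {j. p j}" and pa: "\<not> dot2 p a"
  shows "mvec (transvection a p) (mvec (transvection a p) u) = u"
proof (rule ext)
  fix i
  let ?s = "dot2 p u"
  have e: "mvec (transvection a p) u = (\<lambda>i. u i \<noteq> (a i \<and> ?s))" by (rule ext) (simp add: mvec_transvection[OF p])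
  have "dot2 p (\<lambda>i. u i \<noteq> (a i \<and> ?s)) = (?s \<noteq> dot2 p (\<lambda>i. a i \<and> ?s))"
    by (rule dot2_xor_right[OF p])
  also have "dot2 p (\<lambda>i. a i \<and> ?s) = (?s \<and> dot2 p a)" by (rule dot2_and_const_right)
  finally have ips: "dot2 p (mvec (transvection a p) u) = ?s" using pa e by simp
  have "mvec (transvection a p) (mvec (transvection a p) u) i = (mvec (transvection a p) u i \<noteq> (a i \<and> dot2 p (mvec (transvection a p) u)))"
    by (rule mvec_transvection[OF p])
  also have "\<dots> = ((u i \<noteq> (a i \<and> ?s)) \<noteq> (a i \<and> ?s))" unfolding ips by (simp only: e)
  finally show "mvec (transvection a p) (mvec (transvection a p) u) i = u i" by (cases "u i"; cases "a i \<and> ?s") simp_all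
qed

lemma transvection_finitary: assumes "a \<in> Finf" "p \<in> Finf" shows "finitary (transvection a p)"
proof -
  have "{(i, j). transvection a p i j \<noteq> (i = j)} \<subseteq> {i. a i} \<times> {j. p j}" by (auto simp: transvection_def)
  moreover have "finite ({i. a i} \<times> {j. p j})" using assms by (simp add: Finf_def)
  ultimately show ?thesis unfolding finitary_def by (rule finite_subset)
qed

lemma GLinf_involution_transitive:
  assumes v: "v \<in> Finf" "v \<noteq> (\<lambda>_. False)" and w: "w \<in> Finf" "w \<noteq> (\<lambda>_. False)"
  shows "\<exists>g\<in>GLinf. mmul g g = idm \<and> mvec g v = w"
proof -
  obtain r where r: "v r" using v(2) by auto
  obtain s where s: "w s" using w(2) by auto
  define p where "p = (if w r then (\<lambda>j. j = r) else if v s then (\<lambda>j. j = s) else (\<lambda>j. j = r \<or> j = s))"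
  have rs: "\<not> w r \<Longrightarrow> r \<noteq> s" using s by auto
  have pv: "dot2 p v" and pw: "dot2 p w"
  proof -
    have ip2: "dot2 (\<lambda>j. j = r \<or> j = s) u = (u r \<noteq> u s)" if "r \<noteq> s" for u
    proof -
      have e: "(\<lambda>j. j = r \<or> j = s) = (\<lambda>j. (j = r) \<noteq> (j = s))" using that by (auto simp: fun_eq_iff)
      have "dot2 (\<lambda>j. (j = r) \<noteq> (j = s)) u = (dot2 (\<lambda>j. j = r) u \<noteq> dot2 (\<lambda>j. j = s) u)"
        by (rule dot2_xor_left) simp_all
      then show ?thesis unfolding e by (simp only: dot2_unit_left)
    qed
    show "dot2 p v" using r s rs ip2 by (auto simp: p_def)
    show "dot2 p w" using r s rs ip2 by (auto simp: p_def)
  qed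
  have pf: "finite {j. p j}"
    by (rule finite_subset[of _ "{r, s}"]) (auto simp: p_def split: if_splits)
  define a where "a = vadd v w"
  have pa: "\<not> dot2 p a" unfolding a_def vadd_eq using dot2_xor_right[OF pf] pv pw by simp
  have aF: "a \<in> Finf" unfolding a_def by (rule vadd_Finf[OF v(1) w(1)])
  have pF: "p \<in> Finf" using pf by (simp add: Finf_def)
  have inv: "mmul (transvection a p) (transvection a p) = idm" by (rule involutive_mmul_self) (rule transvection_involutive[OF pf pa])
  have gl: "transvection a p \<in> GLinf" by (rule involution_GLinf[OF transvection_finitary[OF aF pF] inv])
  have "mvec (transvection a p) v = w"
    by (rule ext) (auto simp: mvec_transvection[OF pf] pv a_def vadd_def)
  then show ?thesis using gl inv by blast
qed

section \<open>The Hilbert space l2(X)\<close>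

definition abs_sq :: "('a \<Rightarrow> complex) \<Rightarrow> 'a \<Rightarrow> real" where
  "abs_sq f = (\<lambda>x. (cmod (f x))\<^sup>2)"

lemma l2_iff: "f \<in> l2 X \<longleftrightarrow> (\<forall>x. x \<notin> X \<longrightarrow> f x = 0) \<and> abs_sq f summable_on UNIV"
  by (simp add: l2_def abs_sq_def)

lemma l2_outside: "f \<in> l2 X \<Longrightarrow> x \<notin> X \<Longrightarrow> f x = 0"
  by (simp add: l2_def)

lemma abs_sq_summable: "f \<in> l2 X \<Longrightarrow> abs_sq f summable_on A"
proof -
  assume "f \<in> l2 X"
  then have "abs_sq f summable_on UNIV" by (simp add: l2_iff)
  then show ?thesis using summable_on_subset[of "abs_sq f" UNIV A] by simp
qed

lemma abs_sq_nonneg: "0 \<le> abs_sq f x" by (simp add: abs_sq_def)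

lemma l2_zero: "(\<lambda>_. 0) \<in> l2 X"
  by (simp add: l2_def)

lemma abs_sq_add_le: "abs_sq (\<lambda>x. f x + g x) x \<le> 2 * abs_sq f x + 2 * abs_sq g x"
proof -
  have "cmod (f x + g x) \<le> cmod (f x) + cmod (g x)" by (rule norm_triangle_ineq)
  then have "(cmod (f x + g x))\<^sup>2 \<le> (cmod (f x) + cmod (g x))\<^sup>2"
    by (simp add: power_mono)
  also have "\<dots> \<le> 2 * (cmod (f x))\<^sup>2 + 2 * (cmod (g x))\<^sup>2"
    using sum_squares_bound[of "cmod (f x)" "cmod (g x)"] by (simp add: power2_sum)
  finally show ?thesis by (simp add: abs_sq_def)
qed

lemma l2_add: assumes "f \<in> l2 X" "g \<in> l2 X" shows "(\<lambda>x. f x + g x) \<in> l2 X"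
proof -
  have "(\<lambda>x. 2 * abs_sq f x + 2 * abs_sq g x) summable_on UNIV"
    using assms by (intro summable_on_add summable_on_cmult_right) (simp_all add: abs_sq_summable)
  then have "abs_sq (\<lambda>x. f x + g x) summable_on UNIV"
    by (rule summable_on_comparison_test) (simp_all add: abs_sq_add_le abs_sq_nonneg)
  then show ?thesis using assms by (simp add: l2_iff)
qed

lemma abs_sq_scale: "abs_sq (\<lambda>x. c * f x) = (\<lambda>x. (cmod c)\<^sup>2 * abs_sq f x)"
  by (rule ext) (simp add: abs_sq_def norm_mult power_mult_distrib)

lemma l2_scale: assumes "f \<in> l2 X" shows "(\<lambda>x. c * f x) \<in> l2 X"
  using assms by (simp add: l2_iff abs_sq_scale summable_on_cmult_right)

lemma l2_minus: assumes "f \<in> l2 X" shows "(\<lambda>x. - f x) \<in> l2 X"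
  using l2_scale[OF assms, of "-1"] by simp

lemma l2_diff: assumes "f \<in> l2 X" "g \<in> l2 X" shows "(\<lambda>x. f x - g x) \<in> l2 X"
  using l2_add[OF assms(1) l2_minus[OF assms(2)]] by simp

lemma norm_mult_cnj_le: "cmod (f x * cnj (g x)) \<le> (abs_sq f x + abs_sq g x) / 2"
proof -
  have "2 * (cmod (f x) * cmod (g x)) \<le> (cmod (f x))\<^sup>2 + (cmod (g x))\<^sup>2"
    using sum_squares_bound[of "cmod (f x)" "cmod (g x)"] by simp
  then show ?thesis by (simp add: abs_sq_def norm_mult)
qed

lemma l2_inner_abs_summable: assumes "f \<in> l2 X" "g \<in> l2 X"
  shows "(\<lambda>x. f x * cnj (g x)) abs_summable_on A"
proof (rule abs_summable_on_comparison_test')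
  have "(\<lambda>x. abs_sq f x + abs_sq g x) summable_on A"
    using assms by (intro summable_on_add) (simp_all add: abs_sq_summable)
  then have "(\<lambda>x. (abs_sq f x + abs_sq g x) * (1/2)) summable_on A"
    by (rule summable_on_cmult_left)
  then show "(\<lambda>x. (abs_sq f x + abs_sq g x) / 2) summable_on A" by simp
qed (rule norm_mult_cnj_le)

lemma l2_inner_summable: assumes "f \<in> l2 X" "g \<in> l2 X"
  shows "(\<lambda>x. f x * cnj (g x)) summable_on A"
  by (rule abs_summable_summable[OF l2_inner_abs_summable[OF assms]])

lemma l2_inner_add_left: assumes "f \<in> l2 X" "g \<in> l2 X" "h \<in> l2 X"
  shows "l2_inner (\<lambda>x. f x + g x) h = l2_inner f h + l2_inner g h"
  unfolding l2_inner_def using l2_inner_summable[OF assms(1,3)] l2_inner_summable[OF assms(2,3)]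
  by (simp add: distrib_right infsum_add)

lemma l2_inner_scale_left: "l2_inner (\<lambda>x. c * f x) h = c * l2_inner f h"
  unfolding l2_inner_def by (simp add: mult.assoc infsum_cmult_right')

lemma l2_inner_commute: "l2_inner g f = cnj (l2_inner f g)"
  unfolding l2_inner_def by (simp flip: infsum_cnj add: mult.commute)

lemma l2_inner_diff_left: assumes "f \<in> l2 X" "g \<in> l2 X" "h \<in> l2 X"
  shows "l2_inner (\<lambda>x. f x - g x) h = l2_inner f h - l2_inner g h"
proof -
  have e: "(\<lambda>x. f x - g x) = (\<lambda>x. f x + (-1) * g x)" by simp
  have "l2_inner (\<lambda>x. f x + (-1) * g x) h = l2_inner f h + l2_inner (\<lambda>x. (-1) * g x) h"
    by (rule l2_inner_add_left[OF assms(1) l2_scale[OF assms(2)] assms(3)])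
  also have "\<dots> = l2_inner f h + (-1) * l2_inner g h" by (simp only: l2_inner_scale_left)
  finally show ?thesis unfolding e by simp
qed

lemma l2_inner_diff_right: assumes "f \<in> l2 X" "g \<in> l2 X" "h \<in> l2 X"
  shows "l2_inner h (\<lambda>x. f x - g x) = l2_inner h f - l2_inner h g"
  by (subst (1 2 3) l2_inner_commute) (simp add: l2_inner_diff_left[OF assms])

definition delta :: "'a \<Rightarrow> 'a \<Rightarrow> complex" where
  "delta a = (\<lambda>x. if x = a then 1 else 0)"

lemma delta_l2: "a \<in> X \<Longrightarrow> delta a \<in> l2 X"
proof -
  have "(\<lambda>x. (cmod (delta a x))\<^sup>2) summable_on UNIV"
  proof (rule finite_nonzero_values_imp_summable_on)
    have "{x \<in> UNIV. (cmod (delta a x))\<^sup>2 \<noteq> 0} \<subseteq> {a}" by (auto simp: delta_def)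
    then show "finite {x \<in> UNIV. (cmod (delta a x))\<^sup>2 \<noteq> 0}" using finite_subset by blast
  qed
  moreover assume "a \<in> X"
  ultimately show ?thesis unfolding l2_def by (auto simp: delta_def)
qed

lemma delta_not_l2: "a \<notin> X \<Longrightarrow> delta a \<notin> l2 X"
  unfolding l2_def delta_def by auto

lemma l2_inner_delta_right: "l2_inner f (delta a) = f a"
proof -
  have "l2_inner f (delta a) = (\<Sum>\<^sub>\<infinity>x\<in>{a}. f x * cnj (delta a x))"
    unfolding l2_inner_def by (rule infsum_cong_neutral) (auto simp: delta_def)
  then show ?thesis by (simp add: delta_def)
qed

lemma l2_inner_delta_left: "l2_inner (delta a) f = cnj (f a)"
  by (subst l2_inner_commute) (simp add: l2_inner_delta_right)

lemma infsum_abs_sq_nonneg: "0 \<le> (\<Sum>\<^sub>\<infinity>x. abs_sq f x)"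
  by (simp add: infsum_nonneg abs_sq_nonneg)

lemma l2_norm_eq_sqrt_infsum: "l2_norm f = sqrt (\<Sum>\<^sub>\<infinity>x. abs_sq f x)"
  by (simp add: l2_norm_def abs_sq_def)

lemma l2_norm_nonneg: "0 \<le> l2_norm f"
  unfolding l2_norm_eq_sqrt_infsum by (rule real_sqrt_ge_zero[OF infsum_abs_sq_nonneg])

lemma l2_norm_power2: "(l2_norm f)\<^sup>2 = (\<Sum>\<^sub>\<infinity>x. abs_sq f x)"
  unfolding l2_norm_eq_sqrt_infsum by (rule real_sqrt_pow2[OF infsum_abs_sq_nonneg])

lemma infsum_norm_mult_cnj_le:
  assumes "f \<in> l2 X" "g \<in> l2 X"
  shows "(\<Sum>\<^sub>\<infinity>x. cmod (f x * cnj (g x))) \<le> l2_norm f * l2_norm g"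
proof (rule infsum_le_finite_sums)
  show "(\<lambda>x. cmod (f x * cnj (g x))) summable_on UNIV"
    using l2_inner_abs_summable[OF assms] by simp
next
  fix F :: "'a set" assume "finite F"
  have "(\<Sum>x\<in>F. cmod (f x) * cmod (g x))\<^sup>2 \<le> (\<Sum>x\<in>F. (cmod (f x))\<^sup>2) * (\<Sum>x\<in>F. (cmod (g x))\<^sup>2)"
    by (rule Cauchy_Schwarz_ineq_sum)
  also have "\<dots> \<le> (\<Sum>\<^sub>\<infinity>x. abs_sq f x) * (\<Sum>\<^sub>\<infinity>x. abs_sq g x)"
  proof (rule mult_mono)
    show "(\<Sum>x\<in>F. (cmod (f x))\<^sup>2) \<le> (\<Sum>\<^sub>\<infinity>x. abs_sq f x)"
      using finite_sum_le_infsum[OF abs_sq_summable[OF assms(1)] \<open>finite F\<close>] by (simp add: abs_sq_def)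
    show "(\<Sum>x\<in>F. (cmod (g x))\<^sup>2) \<le> (\<Sum>\<^sub>\<infinity>x. abs_sq g x)"
      using finite_sum_le_infsum[OF abs_sq_summable[OF assms(2)] \<open>finite F\<close>] by (simp add: abs_sq_def)
  qed (simp_all add: infsum_abs_sq_nonneg sum_nonneg)
  also have "\<dots> = (l2_norm f * l2_norm g)\<^sup>2" by (simp add: power_mult_distrib l2_norm_power2)
  finally have "(\<Sum>x\<in>F. cmod (f x) * cmod (g x))\<^sup>2 \<le> (l2_norm f * l2_norm g)\<^sup>2" .
  then have "(\<Sum>x\<in>F. cmod (f x) * cmod (g x)) \<le> l2_norm f * l2_norm g"
    by (rule power2_le_imp_le) (simp add: l2_norm_nonneg)
  then show "(\<Sum>x\<in>F. cmod (f x * cnj (g x))) \<le> l2_norm f * l2_norm g"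
    by (simp add: norm_mult)
qed

lemma l2_Cauchy_Schwarz: assumes "f \<in> l2 X" "g \<in> l2 X"
  shows "cmod (l2_inner f g) \<le> l2_norm f * l2_norm g"
proof -
  have "cmod (infsum (\<lambda>x. f x * cnj (g x)) UNIV) \<le> infsum (\<lambda>x. cmod (f x * cnj (g x))) UNIV"
    by (rule norm_infsum_bound[OF l2_inner_abs_summable[OF assms]])
  then show ?thesis unfolding l2_inner_def using infsum_norm_mult_cnj_le[OF assms] by linarith
qed

section \<open>Bounded operators and their matrix entries\<close>

definition trunc :: "'a set \<Rightarrow> ('a \<Rightarrow> complex) \<Rightarrow> 'a \<Rightarrow> complex" where
  "trunc F f = (\<lambda>x. if x \<in> F then f x else 0)"

definition op_entry :: "'a op \<Rightarrow> 'a \<Rightarrow> 'a \<Rightarrow> complex" where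
  "op_entry T a b = T (delta b) a"

lemma bop_l2: "T \<in> bop X \<Longrightarrow> f \<in> l2 X \<Longrightarrow> T f \<in> l2 X"
  by (simp add: bop_def)

lemma bop_out: "T \<in> bop X \<Longrightarrow> f \<notin> l2 X \<Longrightarrow> T f = (\<lambda>_. 0)"
  by (simp add: bop_def)

lemma bop_add: "T \<in> bop X \<Longrightarrow> f \<in> l2 X \<Longrightarrow> g \<in> l2 X \<Longrightarrow> T (\<lambda>x. f x + g x) = (\<lambda>x. T f x + T g x)"
  by (simp add: bop_def)

lemma bop_scale: "T \<in> bop X \<Longrightarrow> f \<in> l2 X \<Longrightarrow> T (\<lambda>x. c * f x) = (\<lambda>x. c * T f x)"
  by (simp add: bop_def)

lemma bop_bound: assumes "T \<in> bop X"
  obtains C where "C \<ge> 0" "\<And>f. f \<in> l2 X \<Longrightarrow> l2_norm (T f) \<le> C * l2_norm f"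
proof -
  obtain C where C: "\<forall>f\<in>l2 X. l2_norm (T f) \<le> C * l2_norm f" using assms by (auto simp: bop_def)
  have "l2_norm (T f) \<le> max C 0 * l2_norm f" if "f \<in> l2 X" for f
  proof -
    have "C * l2_norm f \<le> max C 0 * l2_norm f" by (rule mult_right_mono) (simp_all add: l2_norm_nonneg)
    then show ?thesis using C that by fastforce
  qed
  then show ?thesis using that[of "max C 0"] by simp
qed

lemma bop_zero: assumes "T \<in> bop X" shows "T (\<lambda>_. 0) = (\<lambda>_. 0)"
proof -
  have "T (\<lambda>x. 0 * (0::complex)) = (\<lambda>x. 0 * T (\<lambda>_. 0) x)"
    by (rule bop_scale[OF assms]) (simp add: l2_zero)
  then show ?thesis by simp
qed

lemma bop_minus: "T \<in> bop X \<Longrightarrow> f \<in> l2 X \<Longrightarrow> g \<in> l2 X \<Longrightarrow> T (\<lambda>x. f x - g x) = (\<lambda>x. T f x - T g x)"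
proof -
  assume a: "T \<in> bop X" "f \<in> l2 X" "g \<in> l2 X"
  have "T (\<lambda>x. f x + (-1) * g x) = (\<lambda>x. T f x + T (\<lambda>x. (-1) * g x) x)"
    by (rule bop_add[OF a(1,2) l2_scale[OF a(3)]])
  also have "T (\<lambda>x. (-1) * g x) = (\<lambda>x. (-1) * T g x)" by (rule bop_scale[OF a(1,3)])
  finally show ?thesis by simp
qed

lemma l2_sum: "finite F \<Longrightarrow> (\<And>b. b \<in> F \<Longrightarrow> g b \<in> l2 X) \<Longrightarrow> (\<lambda>x. \<Sum>b\<in>F. c b * g b x) \<in> l2 X"
proof (induction F rule: finite_induct)
  case empty then show ?case by (simp add: l2_zero)
next
  case (insert a F)
  have "(\<lambda>x. (\<Sum>b\<in>F. c b * g b x) + c a * g a x) \<in> l2 X"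
    using insert by (intro l2_add l2_scale) auto
  then show ?case using insert by (simp add: add.commute)
qed

lemma bop_sum: assumes "T \<in> bop X"
  shows "finite F \<Longrightarrow> (\<And>b. b \<in> F \<Longrightarrow> g b \<in> l2 X) \<Longrightarrow>
    T (\<lambda>x. \<Sum>b\<in>F. c b * g b x) = (\<lambda>y. \<Sum>b\<in>F. c b * T (g b) y)"
proof (induction F rule: finite_induct)
  case empty then show ?case by (simp add: bop_zero[OF assms])
next
  case (insert a F)
  have l: "(\<lambda>x. \<Sum>b\<in>F. c b * g b x) \<in> l2 X" using insert by (intro l2_sum) auto
  have "T (\<lambda>x. (\<Sum>b\<in>F. c b * g b x) + c a * g a x)
      = (\<lambda>y. T (\<lambda>x. \<Sum>b\<in>F. c b * g b x) y + T (\<lambda>x. c a * g a x) y)"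
    using insert l by (intro bop_add[OF assms] l2_scale) auto
  also have "T (\<lambda>x. c a * g a x) = (\<lambda>y. c a * T (g a) y)"
    using insert by (intro bop_scale[OF assms]) auto
  finally show ?case using insert by (simp add: add.commute)
qed

lemma l2_inner_sum_left: assumes "h \<in> l2 X"
  shows "finite F \<Longrightarrow> (\<And>b. b \<in> F \<Longrightarrow> g b \<in> l2 X) \<Longrightarrow>
    l2_inner (\<lambda>x. \<Sum>b\<in>F. c b * g b x) h = (\<Sum>b\<in>F. c b * l2_inner (g b) h)"
proof (induction F rule: finite_induct)
  case empty then show ?case by (simp add: l2_inner_def)
next
  case (insert a F)
  have l: "(\<lambda>x. \<Sum>b\<in>F. c b * g b x) \<in> l2 X" using insert by (intro l2_sum) auto
  have "l2_inner (\<lambda>x. (\<Sum>b\<in>F. c b * g b x) + c a * g a x) h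
      = l2_inner (\<lambda>x. \<Sum>b\<in>F. c b * g b x) h + l2_inner (\<lambda>x. c a * g a x) h"
    using insert l assms by (intro l2_inner_add_left l2_scale) auto
  then show ?case using insert by (simp add: add.commute l2_inner_scale_left)
qed

lemma sum_delta_eq_trunc: "finite F \<Longrightarrow> (\<lambda>x. \<Sum>b\<in>F. c b * delta b x) = trunc F c"
proof (rule ext)
  fix x assume "finite F"
  have "(\<Sum>b\<in>F. c b * delta b x) = (\<Sum>b\<in>F. if b = x then c b else 0)"
    by (rule sum.cong) (auto simp: delta_def)
  also have "\<dots> = trunc F c x" using \<open>finite F\<close> by (simp add: trunc_def sum.delta')
  finally show "(\<Sum>b\<in>F. c b * delta b x) = trunc F c x" .
qed

lemma trunc_l2: assumes "finite F" "F \<subseteq> X" shows "trunc F c \<in> l2 X"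
proof -
  have "(\<lambda>x. \<Sum>b\<in>F. c b * delta b x) \<in> l2 X"
    using assms by (intro l2_sum) (auto intro: delta_l2)
  then show ?thesis using sum_delta_eq_trunc[OF assms(1)] by simp
qed

lemma bop_trunc: assumes "T \<in> bop X" "finite F" "F \<subseteq> X"
  shows "T (trunc F c) = (\<lambda>y. \<Sum>b\<in>F. c b * T (delta b) y)"
  using bop_sum[OF assms(1) assms(2), of delta c] sum_delta_eq_trunc[OF assms(2), of c] assms(3)
  by (auto intro: delta_l2)

lemma infsum_finite_support:
  assumes "finite F" "\<And>x. x \<notin> F \<Longrightarrow> h x = 0"
  shows "(\<Sum>\<^sub>\<infinity>x. h x) = (\<Sum>x\<in>F. h x)"
proof -
  have "(\<Sum>\<^sub>\<infinity>x. h x) = (\<Sum>\<^sub>\<infinity>x\<in>F. h x)"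
    by (rule infsum_cong_neutral) (use assms in auto)
  then show ?thesis using assms(1) by simp
qed

lemma summable_finite_support:
  assumes "finite F" "\<And>x. x \<notin> F \<Longrightarrow> h x = 0"
  shows "h summable_on A"
proof (rule finite_nonzero_values_imp_summable_on)
  have "{x \<in> A. h x \<noteq> 0} \<subseteq> F" using assms by auto
  then show "finite {x \<in> A. h x \<noteq> 0}" using assms(1) finite_subset by blast
qed

lemma abs_sq_trunc: "abs_sq (trunc F f) x = (if x \<in> F then abs_sq f x else 0)"
  by (simp add: abs_sq_def trunc_def)

lemma l2_norm_trunc_power2: assumes "finite F"
  shows "(l2_norm (trunc F f))\<^sup>2 = (\<Sum>x\<in>F. abs_sq f x)"
proof -
  have "(l2_norm (trunc F f))\<^sup>2 = (\<Sum>\<^sub>\<infinity>x. abs_sq (trunc F f) x)" by (rule l2_norm_power2)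
  also have "\<dots> = (\<Sum>x\<in>F. abs_sq (trunc F f) x)"
    by (rule infsum_finite_support[OF assms]) (simp add: abs_sq_trunc)
  also have "\<dots> = (\<Sum>x\<in>F. abs_sq f x)" by (rule sum.cong) (simp_all add: abs_sq_trunc)
  finally show ?thesis .
qed

lemma l2_norm_trunc_le: assumes "f \<in> l2 X" "finite F"
  shows "l2_norm (trunc F f) \<le> l2_norm f"
proof -
  have "(\<Sum>x\<in>F. abs_sq f x) \<le> (\<Sum>\<^sub>\<infinity>x. abs_sq f x)"
    by (rule finite_sum_le_infsum[OF abs_sq_summable[OF assms(1)] assms(2)]) (simp_all add: abs_sq_nonneg)
  then have "(l2_norm (trunc F f))\<^sup>2 \<le> (l2_norm f)\<^sup>2"
    unfolding l2_norm_trunc_power2[OF assms(2)] l2_norm_power2[of f] .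
  then show ?thesis by (rule power2_le_imp_le) (simp add: l2_norm_nonneg)
qed

lemma l2_norm_trunc_remainder_power2: assumes "f \<in> l2 X" "finite F"
  shows "(l2_norm (\<lambda>x. f x - trunc F f x))\<^sup>2 = (\<Sum>\<^sub>\<infinity>x. abs_sq f x) - (\<Sum>x\<in>F. abs_sq f x)"
proof -
  let ?a = "\<lambda>x. if x \<in> F then abs_sq f x else 0"
  let ?b = "\<lambda>x. if x \<in> F then 0 else abs_sq f x"
  have sa: "?a summable_on UNIV" by (rule summable_finite_support[OF assms(2)]) simp
  have sb: "?b summable_on UNIV"
    by (rule summable_on_comparison_test[OF abs_sq_summable[OF assms(1)]]) (simp_all add: abs_sq_nonneg)
  have "(\<Sum>\<^sub>\<infinity>x. abs_sq f x) = (\<Sum>\<^sub>\<infinity>x. ?a x + ?b x)" by (rule infsum_cong) simp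
  also have "\<dots> = (\<Sum>\<^sub>\<infinity>x. ?a x) + (\<Sum>\<^sub>\<infinity>x. ?b x)" by (rule infsum_add[OF sa sb])
  also have "(\<Sum>\<^sub>\<infinity>x. ?a x) = (\<Sum>x\<in>F. ?a x)" by (rule infsum_finite_support[OF assms(2)]) simp
  also have "\<dots> = (\<Sum>x\<in>F. abs_sq f x)" by simp
  finally have e: "(\<Sum>\<^sub>\<infinity>x. ?b x) = (\<Sum>\<^sub>\<infinity>x. abs_sq f x) - (\<Sum>x\<in>F. abs_sq f x)" by simp
  have "abs_sq (\<lambda>x. f x - trunc F f x) = ?b" by (rule ext) (simp add: abs_sq_def trunc_def)
  then show ?thesis using e by (simp add: l2_norm_power2)
qed

lemma l2_norm_trunc_remainder_tendsto: assumes "f \<in> l2 X"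
  shows "((\<lambda>F. l2_norm (\<lambda>x. f x - trunc F f x)) \<longlongrightarrow> 0) (finite_subsets_at_top UNIV)"
proof -
  have t: "((\<lambda>F. \<Sum>x\<in>F. abs_sq f x) \<longlongrightarrow> (\<Sum>\<^sub>\<infinity>x. abs_sq f x)) (finite_subsets_at_top UNIV)"
    by (rule infsum_tendsto[OF abs_sq_summable[OF assms]])
  have "((\<lambda>F. (\<Sum>\<^sub>\<infinity>x. abs_sq f x) - (\<Sum>x\<in>F. abs_sq f x)) \<longlongrightarrow> (\<Sum>\<^sub>\<infinity>x. abs_sq f x) - (\<Sum>\<^sub>\<infinity>x. abs_sq f x))
      (finite_subsets_at_top UNIV)"
    by (intro tendsto_diff tendsto_const t)
  then have "((\<lambda>F. sqrt ((\<Sum>\<^sub>\<infinity>x. abs_sq f x) - (\<Sum>x\<in>F. abs_sq f x))) \<longlongrightarrow> sqrt 0) (finite_subsets_at_top UNIV)"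
    by (intro tendsto_real_sqrt) simp
  moreover have "eventually (\<lambda>F. sqrt ((\<Sum>\<^sub>\<infinity>x. abs_sq f x) - (\<Sum>x\<in>F. abs_sq f x)) = l2_norm (\<lambda>x. f x - trunc F f x))
      (finite_subsets_at_top UNIV)"
  proof -
    have "eventually (\<lambda>F. finite F) (finite_subsets_at_top UNIV)"
      by (simp add: eventually_finite_subsets_at_top_weakI)
    then show ?thesis
    proof (rule eventually_mono)
      fix F :: "'a set" assume "finite F"
      show "sqrt ((\<Sum>\<^sub>\<infinity>x. abs_sq f x) - (\<Sum>x\<in>F. abs_sq f x)) = l2_norm (\<lambda>x. f x - trunc F f x)"
        using l2_norm_trunc_remainder_power2[OF assms \<open>finite F\<close>] l2_norm_nonneg
        by (metis real_sqrt_abs abs_of_nonneg power2_eq_square real_sqrt_abs2)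
    qed
  qed
  ultimately show ?thesis by (simp add: tendsto_cong)
qed

definition adjoint_op :: "'a set \<Rightarrow> 'a op \<Rightarrow> 'a op" where
  "adjoint_op X T g = (if g \<in> l2 X then (\<lambda>b. if b \<in> X then l2_inner g (T (delta b)) else 0) else (\<lambda>_. 0))"

lemma sum_abs_sq_adjoint_op_le:
  assumes T: "T \<in> bop X" and C: "C \<ge> 0" "\<And>f. f \<in> l2 X \<Longrightarrow> l2_norm (T f) \<le> C * l2_norm f"
    and g: "g \<in> l2 X" and F: "finite F" "F \<subseteq> X"
  shows "(\<Sum>b\<in>F. abs_sq (adjoint_op X T g) b) \<le> (C * l2_norm g)\<^sup>2"
proof -
  let ?s = "adjoint_op X T g"
  let ?Q = "\<Sum>b\<in>F. abs_sq ?s b"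
  let ?f = "trunc F ?s"
  have fl: "?f \<in> l2 X" by (rule trunc_l2[OF F])
  have Tf: "T ?f = (\<lambda>y. \<Sum>b\<in>F. ?s b * T (delta b) y)" by (rule bop_trunc[OF T F])
  have dl: "\<And>b. b \<in> F \<Longrightarrow> T (delta b) \<in> l2 X" using F by (intro bop_l2[OF T] delta_l2) auto
  have "l2_inner (T ?f) g = (\<Sum>b\<in>F. ?s b * l2_inner (T (delta b)) g)"
    unfolding Tf by (rule l2_inner_sum_left[OF g F(1)]) (rule dl)
  also have "\<dots> = (\<Sum>b\<in>F. ?s b * cnj (?s b))"
  proof (rule sum.cong)
    fix b assume "b \<in> F"
    then have "?s b = l2_inner g (T (delta b))" using g F by (auto simp: adjoint_op_def)
    then show "?s b * l2_inner (T (delta b)) g = ?s b * cnj (?s b)"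
      by (simp add: l2_inner_commute[of g])
  qed simp
  also have "\<dots> = complex_of_real ?Q" by (simp add: abs_sq_def flip: complex_norm_square)
  finally have e: "l2_inner (T ?f) g = complex_of_real ?Q" .
  have Q0: "0 \<le> ?Q" by (simp add: sum_nonneg abs_sq_nonneg)
  have nf: "l2_norm ?f = sqrt ?Q"
    using l2_norm_trunc_power2[OF F(1), of ?s] l2_norm_nonneg[of ?f] by (metis real_sqrt_unique)
  have "?Q = cmod (l2_inner (T ?f) g)" unfolding e using Q0 by (simp only: norm_of_real abs_of_nonneg)
  also have "\<dots> \<le> l2_norm (T ?f) * l2_norm g" by (rule l2_Cauchy_Schwarz[OF bop_l2[OF T fl] g])
  also have "\<dots> \<le> C * l2_norm ?f * l2_norm g"
    by (rule mult_right_mono[OF C(2)[OF fl] l2_norm_nonneg])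
  finally have le: "?Q \<le> C * sqrt ?Q * l2_norm g" unfolding nf .
  show ?thesis
  proof (cases "?Q = 0")
    case True then show ?thesis by simp
  next
    case False
    then have sp: "sqrt ?Q > 0" using Q0 by simp
    have "sqrt ?Q * sqrt ?Q = ?Q" using Q0 by simp
    then have "sqrt ?Q * sqrt ?Q \<le> (C * l2_norm g) * sqrt ?Q" using le
      by (simp add: mult_ac)
    then have "sqrt ?Q \<le> C * l2_norm g" using mult_right_le_imp_le[OF _ sp] by blast
    then have "(sqrt ?Q)\<^sup>2 \<le> (C * l2_norm g)\<^sup>2"
      by (rule power_mono) (simp add: Q0)
    then show ?thesis by (simp only: real_sqrt_pow2[OF Q0])
  qed
qed

lemma adjoint_op_l2:
  assumes T: "T \<in> bop X" and C: "C \<ge> 0" "\<And>f. f \<in> l2 X \<Longrightarrow> l2_norm (T f) \<le> C * l2_norm f"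
    and g: "g \<in> l2 X"
  shows "adjoint_op X T g \<in> l2 X \<and> l2_norm (adjoint_op X T g) \<le> C * l2_norm g"
proof -
  let ?s = "adjoint_op X T g"
  have fin: "(\<Sum>b\<in>F. abs_sq ?s b) \<le> (C * l2_norm g)\<^sup>2" if "finite F" for F
  proof -
    have "(\<Sum>b\<in>F. abs_sq ?s b) = (\<Sum>b\<in>F \<inter> X. abs_sq ?s b)"
      by (rule sum.mono_neutral_right) (use that g in \<open>auto simp: adjoint_op_def abs_sq_def\<close>)
    also have "\<dots> \<le> (C * l2_norm g)\<^sup>2" by (rule sum_abs_sq_adjoint_op_le[OF T C g]) (use that in auto)
    finally show ?thesis .
  qed
  have sm: "abs_sq ?s summable_on UNIV"
  proof (rule nonneg_bdd_above_summable_on)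
    show "bdd_above (sum (abs_sq ?s) ` {F. F \<subseteq> UNIV \<and> finite F})"
      using fin by (auto intro!: bdd_aboveI[where M="(C * l2_norm g)\<^sup>2"])
  qed (simp add: abs_sq_nonneg)
  have out: "\<forall>x. x \<notin> X \<longrightarrow> ?s x = 0" by (simp add: adjoint_op_def)
  have l: "?s \<in> l2 X" using sm out by (simp add: l2_iff)
  have "(\<Sum>\<^sub>\<infinity>x. abs_sq ?s x) \<le> (C * l2_norm g)\<^sup>2"
    by (rule infsum_le_finite_sums[OF sm]) (rule fin)
  then have "(l2_norm ?s)\<^sup>2 \<le> (C * l2_norm g)\<^sup>2" by (simp only: l2_norm_power2)
  then have "l2_norm ?s \<le> C * l2_norm g"
    by (rule power2_le_imp_le) (simp add: C(1) l2_norm_nonneg)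
  then show ?thesis using l by simp
qed

lemma adjoint_op_add: assumes T: "T \<in> bop X" and g: "g \<in> l2 X" "h \<in> l2 X"
  shows "adjoint_op X T (\<lambda>x. g x + h x) = (\<lambda>x. adjoint_op X T g x + adjoint_op X T h x)"
proof (rule ext)
  fix b
  show "adjoint_op X T (\<lambda>x. g x + h x) b = adjoint_op X T g b + adjoint_op X T h b"
  proof (cases "b \<in> X")
    case True
    then have "T (delta b) \<in> l2 X" by (intro bop_l2[OF T] delta_l2)
    then show ?thesis using True g l2_add[OF g] by (simp add: adjoint_op_def l2_inner_add_left)
  qed (use g l2_add[OF g] in \<open>simp add: adjoint_op_def\<close>)
qed

lemma adjoint_op_scale: assumes T: "T \<in> bop X" and g: "g \<in> l2 X"
  shows "adjoint_op X T (\<lambda>x. c * g x) = (\<lambda>x. c * adjoint_op X T g x)"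
  using g l2_scale[OF g, of c] by (auto simp: adjoint_op_def l2_inner_scale_left)

lemma trunc_l2_of_l2:
  assumes f: "f \<in> l2 X" and F: "finite F"
  shows "trunc F f \<in> l2 X"
proof -
  have "trunc F f = trunc (F \<inter> X) f"
    by (rule ext) (use f in \<open>auto simp: trunc_def l2_outside\<close>)
  then show ?thesis using F by (simp add: trunc_l2)
qed

lemma l2_inner_op_trunc_tendsto:
  assumes T: "T \<in> bop X" and f: "f \<in> l2 X" and g: "g \<in> l2 X"
  shows "((\<lambda>F. l2_inner (T (trunc F f)) g) \<longlongrightarrow> l2_inner (T f) g) (finite_subsets_at_top UNIV)"
proof -
  obtain C where C: "C \<ge> 0" "\<And>f. f \<in> l2 X \<Longrightarrow> l2_norm (T f) \<le> C * l2_norm f"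
    using bop_bound[OF T] by blast
  let ?psi = "\<lambda>F. l2_inner (T (trunc F f)) g"
  have bound: "norm (?psi F - l2_inner (T f) g) \<le> C * l2_norm g * l2_norm (\<lambda>x. f x - trunc F f x)"
    if F: "finite F" for F
  proof -
    have tl: "trunc F f \<in> l2 X" by (rule trunc_l2_of_l2[OF f F])
    have dl: "(\<lambda>x. f x - trunc F f x) \<in> l2 X" by (rule l2_diff[OF f tl])
    have "l2_inner (T f) g - ?psi F = l2_inner (\<lambda>x. T f x - T (trunc F f) x) g"
      by (rule l2_inner_diff_left[where X=X, symmetric]) (simp_all add: bop_l2[OF T] f tl g)
    also have "(\<lambda>x. T f x - T (trunc F f) x) = T (\<lambda>x. f x - trunc F f x)"
      by (rule bop_minus[OF T f tl, symmetric])
    finally have e: "l2_inner (T f) g - ?psi F = l2_inner (T (\<lambda>x. f x - trunc F f x)) g" .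
    have "norm (?psi F - l2_inner (T f) g) = cmod (l2_inner (T f) g - ?psi F)"
      by (simp add: norm_minus_commute)
    also have "\<dots> \<le> l2_norm (T (\<lambda>x. f x - trunc F f x)) * l2_norm g"
      unfolding e by (rule l2_Cauchy_Schwarz[OF bop_l2[OF T dl] g])
    also have "\<dots> \<le> C * l2_norm (\<lambda>x. f x - trunc F f x) * l2_norm g"
      by (rule mult_right_mono[OF C(2)[OF dl] l2_norm_nonneg])
    finally show ?thesis by (simp add: mult_ac)
  qed
  have "((\<lambda>F. ?psi F - l2_inner (T f) g) \<longlongrightarrow> 0) (finite_subsets_at_top UNIV)"
  proof (rule Lim_null_comparison)
    show "eventually (\<lambda>F. norm (?psi F - l2_inner (T f) g) \<le>
        C * l2_norm g * l2_norm (\<lambda>x. f x - trunc F f x)) (finite_subsets_at_top UNIV)"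
      using eventually_finite_subsets_at_top_weakI bound by blast
    show "((\<lambda>F. C * l2_norm g * l2_norm (\<lambda>x. f x - trunc F f x)) \<longlongrightarrow> 0) (finite_subsets_at_top UNIV)"
      using tendsto_mult_right_zero[OF l2_norm_trunc_remainder_tendsto[OF f], of "C * l2_norm g"] by simp
  qed
  then show ?thesis by (rule LIM_zero_cancel)
qed

lemma l2_inner_op_trunc_eq_sum:
  assumes T: "T \<in> bop X" and f: "f \<in> l2 X" and g: "g \<in> l2 X" and F: "finite F"
  shows "l2_inner (T (trunc F f)) g = (\<Sum>b\<in>F. f b * cnj (adjoint_op X T g b))"
proof -
  have F': "finite (F \<inter> X)" "F \<inter> X \<subseteq> X" using F by auto
  have tr: "trunc F f = trunc (F \<inter> X) f"
    by (rule ext) (use f in \<open>auto simp: trunc_def l2_outside\<close>)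
  have dl: "\<And>b. b \<in> F \<inter> X \<Longrightarrow> T (delta b) \<in> l2 X" by (intro bop_l2[OF T] delta_l2) auto
  have "l2_inner (T (trunc F f)) g = l2_inner (\<lambda>y. \<Sum>b\<in>F \<inter> X. f b * T (delta b) y) g"
    unfolding tr bop_trunc[OF T F'] ..
  also have "\<dots> = (\<Sum>b\<in>F \<inter> X. f b * l2_inner (T (delta b)) g)"
    by (rule l2_inner_sum_left[OF g F'(1)]) (rule dl)
  also have "\<dots> = (\<Sum>b\<in>F \<inter> X. f b * cnj (adjoint_op X T g b))"
    by (rule sum.cong) (use g in \<open>simp_all add: adjoint_op_def l2_inner_commute[of g]\<close>)
  also have "\<dots> = (\<Sum>b\<in>F. f b * cnj (adjoint_op X T g b))"
    by (rule sum.mono_neutral_left) (use F f in \<open>auto simp: l2_outside\<close>)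
  finally show ?thesis .
qed

lemma l2_inner_adjoint_op:
  assumes T: "T \<in> bop X" and f: "f \<in> l2 X" and g: "g \<in> l2 X"
  shows "l2_inner (T f) g = l2_inner f (adjoint_op X T g)"
proof -
  obtain C where C: "C \<ge> 0" "\<And>f. f \<in> l2 X \<Longrightarrow> l2_norm (T f) \<le> C * l2_norm f"
    using bop_bound[OF T] by blast
  let ?phi = "\<lambda>b. f b * cnj (adjoint_op X T g b)"
  have "adjoint_op X T g \<in> l2 X" using adjoint_op_l2[OF T C g] by blast
  then have lim_sum: "(sum ?phi \<longlongrightarrow> infsum ?phi UNIV) (finite_subsets_at_top UNIV)"
    by (rule infsum_tendsto[OF l2_inner_summable[OF f]])
  have "eventually (\<lambda>F. l2_inner (T (trunc F f)) g = sum ?phi F) (finite_subsets_at_top UNIV)"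
    using eventually_finite_subsets_at_top_weakI l2_inner_op_trunc_eq_sum[OF T f g] by blast
  then have "(sum ?phi \<longlongrightarrow> l2_inner (T f) g) (finite_subsets_at_top UNIV)"
    by (rule Lim_transform_eventually[OF l2_inner_op_trunc_tendsto[OF T f g]])
  then have "l2_inner (T f) g = infsum ?phi UNIV"
    using lim_sum by (intro tendsto_unique[OF finite_subsets_at_top_neq_bot])
  then show ?thesis by (simp add: l2_inner_def)
qed

lemma adjoint_op_bop: assumes T: "T \<in> bop X" shows "adjoint_op X T \<in> bop X"
proof -
  obtain C where C: "C \<ge> 0" "\<And>f. f \<in> l2 X \<Longrightarrow> l2_norm (T f) \<le> C * l2_norm f"
    using bop_bound[OF T] by blast
  show ?thesis unfolding bop_def
    using adjoint_op_l2[OF T C] adjoint_op_add[OF T] adjoint_op_scale[OF T]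
    by (auto simp: adjoint_op_def intro!: exI[where x=C])
qed

lemma l2_norm_scale: "l2_norm (\<lambda>x. c * f x) = cmod c * l2_norm f"
proof -
  have "l2_norm (\<lambda>x. c * f x) = sqrt ((cmod c)\<^sup>2 * (\<Sum>\<^sub>\<infinity>x. abs_sq f x))"
    by (simp add: l2_norm_eq_sqrt_infsum abs_sq_scale infsum_cmult_right')
  also have "\<dots> = cmod c * l2_norm f" by (simp add: real_sqrt_mult l2_norm_eq_sqrt_infsum)
  finally show ?thesis .
qed

lemma abs_sq_add_le_cross: "abs_sq (\<lambda>x. f x + g x) x \<le> abs_sq f x + abs_sq g x + 2 * cmod (f x * cnj (g x))"
proof -
  have "cmod (f x + g x) \<le> cmod (f x) + cmod (g x)" by (rule norm_triangle_ineq)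
  then have "(cmod (f x + g x))\<^sup>2 \<le> (cmod (f x) + cmod (g x))\<^sup>2"
    by (simp add: power_mono)
  then show ?thesis by (simp add: abs_sq_def power2_sum norm_mult)
qed

lemma l2_norm_triangle: assumes f: "f \<in> l2 X" and g: "g \<in> l2 X"
  shows "l2_norm (\<lambda>x. f x + g x) \<le> l2_norm f + l2_norm g"
proof -
  have s1: "abs_sq (\<lambda>x. f x + g x) summable_on UNIV" using l2_add[OF f g] by (rule abs_sq_summable)
  have s2: "(\<lambda>x. abs_sq f x + abs_sq g x + 2 * cmod (f x * cnj (g x))) summable_on UNIV"
    using abs_sq_summable[OF f] abs_sq_summable[OF g] l2_inner_abs_summable[OF f g]
    by (intro summable_on_add summable_on_cmult_right) auto
  have "(l2_norm (\<lambda>x. f x + g x))\<^sup>2 = (\<Sum>\<^sub>\<infinity>x. abs_sq (\<lambda>x. f x + g x) x)" by (rule l2_norm_power2)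
  also have "\<dots> \<le> (\<Sum>\<^sub>\<infinity>x. abs_sq f x + abs_sq g x + 2 * cmod (f x * cnj (g x)))"
    by (rule infsum_mono[OF s1 s2]) (rule abs_sq_add_le_cross)
  also have "\<dots> = (\<Sum>\<^sub>\<infinity>x. abs_sq f x) + (\<Sum>\<^sub>\<infinity>x. abs_sq g x) + 2 * (\<Sum>\<^sub>\<infinity>x. cmod (f x * cnj (g x)))"
  proof -
    have a: "(\<lambda>x. abs_sq f x + abs_sq g x) summable_on UNIV"
      using abs_sq_summable[OF f] abs_sq_summable[OF g] by (rule summable_on_add)
    have b: "(\<lambda>x. 2 * cmod (f x * cnj (g x))) summable_on UNIV"
      using l2_inner_abs_summable[OF f g] by (intro summable_on_cmult_right) auto
    show ?thesis
      using infsum_add[OF a b] infsum_add[OF abs_sq_summable[OF f] abs_sq_summable[OF g]] infsum_cmult_right'[of 2]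
      by simp
  qed
  also have "\<dots> \<le> (l2_norm f)\<^sup>2 + (l2_norm g)\<^sup>2 + 2 * (l2_norm f * l2_norm g)"
    using infsum_norm_mult_cnj_le[OF f g] by (simp add: l2_norm_power2)
  also have "\<dots> = (l2_norm f + l2_norm g)\<^sup>2" by (simp add: power2_sum)
  finally show ?thesis
    by (rule power2_le_imp_le) (simp add: l2_norm_nonneg add_nonneg_nonneg)
qed

lemma bop_outside: assumes "T \<in> bop X" "a \<notin> X" shows "T f a = 0"
proof (cases "f \<in> l2 X")
  case True
  show ?thesis by (rule l2_outside[OF bop_l2[OF assms(1) True] assms(2)])
qed (simp add: bop_out[OF assms(1)])

lemma idop_bop: "idop X \<in> bop X"
  unfolding bop_def idop_def
  by (auto simp: l2_add l2_scale intro!: exI[where x=1])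

lemma op_add_bop: assumes T: "T \<in> bop X" and S: "S \<in> bop X" shows "op_add T S \<in> bop X"
proof -
  obtain C1 where C1: "C1 \<ge> 0" "\<And>f. f \<in> l2 X \<Longrightarrow> l2_norm (T f) \<le> C1 * l2_norm f"
    using bop_bound[OF T] by blast
  obtain C2 where C2: "C2 \<ge> 0" "\<And>f. f \<in> l2 X \<Longrightarrow> l2_norm (S f) \<le> C2 * l2_norm f"
    using bop_bound[OF S] by blast
  have b: "l2_norm (op_add T S f) \<le> (C1 + C2) * l2_norm f" if "f \<in> l2 X" for f
  proof -
    have "l2_norm (op_add T S f) \<le> l2_norm (T f) + l2_norm (S f)"
      unfolding op_add_def by (rule l2_norm_triangle[OF bop_l2[OF T that] bop_l2[OF S that]])
    also have "\<dots> \<le> C1 * l2_norm f + C2 * l2_norm f" using C1(2)[OF that] C2(2)[OF that] by simp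
    finally show ?thesis by (simp add: distrib_right)
  qed
  show ?thesis unfolding bop_def mem_Collect_eq
  proof (intro conjI ballI allI impI)
    fix f assume fl: "f \<in> l2 X"
    show "op_add T S f \<in> l2 X" unfolding op_add_def by (rule l2_add[OF bop_l2[OF T fl] bop_l2[OF S fl]])
  next
    fix f assume "f \<notin> l2 X"
    then show "op_add T S f = (\<lambda>_. 0)" using T S by (simp add: op_add_def bop_out)
  next
    fix f g assume "f \<in> l2 X" "g \<in> l2 X"
    then show "op_add T S (\<lambda>x. f x + g x) = (\<lambda>x. op_add T S f x + op_add T S g x)"
      using T S by (simp add: op_add_def bop_add algebra_simps)
  next
    fix f c assume "f \<in> l2 X"
    then show "op_add T S (\<lambda>x. c * f x) = (\<lambda>x. c * op_add T S f x)"
      using T S by (simp add: op_add_def bop_scale algebra_simps)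
  next
    show "\<exists>C. \<forall>f\<in>l2 X. l2_norm (op_add T S f) \<le> C * l2_norm f" using b by blast
  qed
qed

lemma op_scale_bop: assumes T: "T \<in> bop X" shows "op_scale c T \<in> bop X"
proof -
  obtain C1 where C1: "C1 \<ge> 0" "\<And>f. f \<in> l2 X \<Longrightarrow> l2_norm (T f) \<le> C1 * l2_norm f"
    using bop_bound[OF T] by blast
  have b: "l2_norm (op_scale c T f) \<le> (cmod c * C1) * l2_norm f" if "f \<in> l2 X" for f
    unfolding op_scale_def l2_norm_scale using C1(2)[OF that]
    by (simp add: mult.assoc mult_left_mono)
  show ?thesis unfolding bop_def mem_Collect_eq
  proof (intro conjI ballI allI impI)
    fix f assume fl: "f \<in> l2 X"
    show "op_scale c T f \<in> l2 X" unfolding op_scale_def by (rule l2_scale[OF bop_l2[OF T fl]])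
  next
    fix f assume "f \<notin> l2 X"
    then show "op_scale c T f = (\<lambda>_. 0)" using T by (simp add: op_scale_def bop_out)
  next
    fix f g assume "f \<in> l2 X" "g \<in> l2 X"
    then show "op_scale c T (\<lambda>x. f x + g x) = (\<lambda>x. op_scale c T f x + op_scale c T g x)"
      using T by (simp add: op_scale_def bop_add algebra_simps)
  next
    fix f d assume "f \<in> l2 X"
    then show "op_scale c T (\<lambda>x. d * f x) = (\<lambda>x. d * op_scale c T f x)"
      using T by (simp add: op_scale_def bop_scale algebra_simps)
  next
    show "\<exists>C. \<forall>f\<in>l2 X. l2_norm (op_scale c T f) \<le> C * l2_norm f" using b by blast
  qed
qed

lemma comp_bop: assumes T: "T \<in> bop X" and S: "S \<in> bop X" shows "T \<circ> S \<in> bop X"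
proof -
  obtain C1 where C1: "C1 \<ge> 0" "\<And>f. f \<in> l2 X \<Longrightarrow> l2_norm (T f) \<le> C1 * l2_norm f"
    using bop_bound[OF T] by blast
  obtain C2 where C2: "C2 \<ge> 0" "\<And>f. f \<in> l2 X \<Longrightarrow> l2_norm (S f) \<le> C2 * l2_norm f"
    using bop_bound[OF S] by blast
  have b: "l2_norm ((T \<circ> S) f) \<le> (C1 * C2) * l2_norm f" if "f \<in> l2 X" for f
  proof -
    have "l2_norm ((T \<circ> S) f) \<le> C1 * l2_norm (S f)" using C1(2)[OF bop_l2[OF S that]] by simp
    also have "\<dots> \<le> C1 * (C2 * l2_norm f)" by (rule mult_left_mono[OF C2(2)[OF that] C1(1)])
    finally show ?thesis by (simp add: mult.assoc)
  qed
  show ?thesis unfolding bop_def mem_Collect_eq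
  proof (intro conjI ballI allI impI)
    fix f assume "f \<in> l2 X"
    then show "(T \<circ> S) f \<in> l2 X" using T S by (simp add: bop_l2)
  next
    fix f assume "f \<notin> l2 X"
    then show "(T \<circ> S) f = (\<lambda>_. 0)" using T S by (simp add: bop_out bop_zero)
  next
    fix f g assume "f \<in> l2 X" "g \<in> l2 X"
    then show "(T \<circ> S) (\<lambda>x. f x + g x) = (\<lambda>x. (T \<circ> S) f x + (T \<circ> S) g x)"
      using T S by (simp add: bop_add bop_l2)
  next
    fix f d assume "f \<in> l2 X"
    then show "(T \<circ> S) (\<lambda>x. d * f x) = (\<lambda>x. d * (T \<circ> S) f x)"
      using T S by (simp add: bop_scale bop_l2)
  next
    show "\<exists>C. \<forall>f\<in>l2 X. l2_norm ((T \<circ> S) f) \<le> C * l2_norm f" using b by blast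
  qed
qed

lemma op_apply_eq_infsum_entries:
  assumes T: "T \<in> bop X" and f: "f \<in> l2 X" and a: "a \<in> X"
  shows "(\<lambda>b. f b * op_entry T a b) summable_on UNIV \<and> T f a = (\<Sum>\<^sub>\<infinity>b. f b * op_entry T a b)"
proof -
  let ?S = "adjoint_op X T"
  have dl: "delta a \<in> l2 X" by (rule delta_l2[OF a])
  have sl: "?S (delta a) \<in> l2 X" using adjoint_op_bop[OF T] dl by (rule bop_l2)
  have e: "f b * cnj (?S (delta a) b) = f b * op_entry T a b" for b
  proof (cases "b \<in> X")
    case True
    then show ?thesis using dl by (simp add: adjoint_op_def l2_inner_delta_left op_entry_def)
  qed (simp add: l2_outside[OF f])
  have "T f a = l2_inner (T f) (delta a)" by (simp add: l2_inner_delta_right)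
  also have "\<dots> = l2_inner f (?S (delta a))" by (rule l2_inner_adjoint_op[OF T f dl])
  also have "\<dots> = (\<Sum>\<^sub>\<infinity>b. f b * op_entry T a b)" unfolding l2_inner_def e ..
  finally show ?thesis using l2_inner_summable[OF f sl, of UNIV] unfolding e by simp
qed

lemma is_adjoint_entry:
  assumes S: "S \<in> bop X" and adj: "is_adjoint X T S" and a: "a \<in> X" and b: "b \<in> X"
  shows "op_entry S a b = cnj (op_entry T b a)"
proof -
  have "op_entry S a b = l2_inner (S (delta b)) (delta a)" by (simp add: op_entry_def l2_inner_delta_right)
  also have "\<dots> = cnj (l2_inner (delta a) (S (delta b)))" by (rule l2_inner_commute)
  also have "l2_inner (delta a) (S (delta b)) = l2_inner (T (delta a)) (delta b)"
    using adj delta_l2[OF a] delta_l2[OF b] unfolding is_adjoint_def by simp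
  also have "\<dots> = op_entry T b a" by (simp add: op_entry_def l2_inner_delta_right)
  finally show ?thesis .
qed

lemma op_entry_outside_col: "T \<in> bop X \<Longrightarrow> b \<notin> X \<Longrightarrow> op_entry T a b = 0"
  by (simp add: op_entry_def bop_out delta_not_l2)

lemma op_entry_outside_row: "T \<in> bop X \<Longrightarrow> a \<notin> X \<Longrightarrow> op_entry T a b = 0"
  by (simp add: op_entry_def bop_outside)

lemma norm_less_all_imp_zero: assumes "\<And>e. e > 0 \<Longrightarrow> cmod z < e" shows "z = 0"
  using assms[of "cmod z"] by (cases "z = 0") auto

section \<open>The left regular representation\<close>

lemma infsum_reindex_bij_extend:
  assumes "bij_betw \<phi> A A" "\<And>x. x \<notin> A \<Longrightarrow> u x = 0"
  shows "(\<Sum>\<^sub>\<infinity>h. if h \<in> A then u (\<phi> h) else 0) = (\<Sum>\<^sub>\<infinity>h. u h)"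
proof -
  have "(\<Sum>\<^sub>\<infinity>h. if h \<in> A then u (\<phi> h) else 0) = (\<Sum>\<^sub>\<infinity>h\<in>A. u (\<phi> h))"
    by (rule infsum_cong_neutral) auto
  also have "\<dots> = (\<Sum>\<^sub>\<infinity>h\<in>A. u h)" by (rule infsum_reindex_bij_betw[OF assms(1)])
  also have "\<dots> = (\<Sum>\<^sub>\<infinity>h. u h)" by (rule infsum_cong_neutral) (use assms(2) in auto)
  finally show ?thesis .
qed

lemma summable_reindex_bij_extend:
  fixes u :: "'a \<Rightarrow> real"
  assumes "bij_betw \<phi> A A" "u summable_on UNIV"
  shows "(\<lambda>h. if h \<in> A then u (\<phi> h) else 0) summable_on UNIV"
proof -
  have "u summable_on A" using summable_on_subset[OF assms(2) subset_UNIV] .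
  then have "(\<lambda>h. u (\<phi> h)) summable_on A" using summable_on_reindex_bij_betw[OF assms(1)] by blast
  then show ?thesis by (rule summable_on_cong_neutral[THEN iffD1, rotated -1]) auto
qed

context group begin

lemma bij_betw_mult_left: "g \<in> carrier G \<Longrightarrow> bij_betw (\<lambda>h. g \<otimes> h) (carrier G) (carrier G)"
  by (rule bij_betw_byWitness[where f'="\<lambda>h. inv g \<otimes> h"]) (auto simp: m_assoc[symmetric])

lemma bij_betw_mult_right: "g \<in> carrier G \<Longrightarrow> bij_betw (\<lambda>h. h \<otimes> g) (carrier G) (carrier G)"
  by (rule bij_betw_byWitness[where f'="\<lambda>h. h \<otimes> inv g"]) (auto simp: m_assoc)

lemma lreg_apply: "f \<in> l2 (carrier G) \<Longrightarrow> lreg G g f = (\<lambda>h. if h \<in> carrier G then f (inv g \<otimes> h) else 0)"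
  by (simp add: lreg_def)

lemma lreg_l2: assumes g: "g \<in> carrier G" and f: "f \<in> l2 (carrier G)"
  shows "lreg G g f \<in> l2 (carrier G) \<and> l2_norm (lreg G g f) = l2_norm f"
proof -
  have b: "bij_betw (\<lambda>h. inv g \<otimes> h) (carrier G) (carrier G)" using g by (intro bij_betw_mult_left) simp
  have e: "abs_sq (lreg G g f) = (\<lambda>h. if h \<in> carrier G then abs_sq f (inv g \<otimes> h) else 0)"
    by (rule ext) (simp add: lreg_apply[OF f] abs_sq_def)
  have s: "abs_sq (lreg G g f) summable_on UNIV" unfolding e by (rule summable_reindex_bij_extend[OF b abs_sq_summable[OF f]])
  have n: "(\<Sum>\<^sub>\<infinity>h. abs_sq (lreg G g f) h) = (\<Sum>\<^sub>\<infinity>h. abs_sq f h)"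
    unfolding e by (rule infsum_reindex_bij_extend[OF b]) (simp add: abs_sq_def l2_outside[OF f])
  show ?thesis using s n by (simp add: l2_iff lreg_apply[OF f] l2_norm_eq_sqrt_infsum)
qed

lemma lreg_bop: assumes g: "g \<in> carrier G" shows "lreg G g \<in> bop (carrier G)"
  unfolding bop_def mem_Collect_eq
proof (intro conjI ballI allI impI)
  fix f assume "f \<in> l2 (carrier G)" then show "lreg G g f \<in> l2 (carrier G)" using lreg_l2[OF g] by blast
next
  fix f assume "f \<notin> l2 (carrier G)" then show "lreg G g f = (\<lambda>_. 0)" by (simp add: lreg_def)
next
  fix f h assume "f \<in> l2 (carrier G)" "h \<in> l2 (carrier G)"
  then show "lreg G g (\<lambda>x. f x + h x) = (\<lambda>x. lreg G g f x + lreg G g h x)"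
    using l2_add[of f "carrier G" h] by (simp add: lreg_apply fun_eq_iff)
next
  fix f c assume "f \<in> l2 (carrier G)"
  then show "lreg G g (\<lambda>x. c * f x) = (\<lambda>x. c * lreg G g f x)"
    using l2_scale[of f "carrier G" c] by (simp add: lreg_apply fun_eq_iff)
next
  show "\<exists>C. \<forall>f\<in>l2 (carrier G). l2_norm (lreg G g f) \<le> C * l2_norm f"
    using lreg_l2[OF g] by (intro exI[where x=1]) simp
qed

lemma lreg_delta: assumes g: "g \<in> carrier G" and b: "b \<in> carrier G"
  shows "lreg G g (delta b) = delta (g \<otimes> b)"
proof (rule ext)
  fix h
  have la: "lreg G g (delta b) h = (if h \<in> carrier G then delta b (inv g \<otimes> h) else 0)"
    by (simp only: lreg_apply[OF delta_l2[OF b]])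
  show "lreg G g (delta b) h = delta (g \<otimes> b) h"
  proof (cases "h \<in> carrier G")
    case True
    have "(inv g \<otimes> h = b) \<longleftrightarrow> (h = g \<otimes> b)"
      using g b True by (metis inv_closed l_inv m_assoc l_one r_inv)
    then show ?thesis using True la by (simp add: delta_def)
  next
    case False
    then have "h \<noteq> g \<otimes> b" using g b by auto
    then show ?thesis using False la by (simp add: delta_def)
  qed
qed

lemma lreg_comp: assumes g: "g \<in> carrier G" and h: "h \<in> carrier G"
  shows "lreg G g \<circ> lreg G h = lreg G (g \<otimes> h)"
proof (rule ext)
  fix f
  show "(lreg G g \<circ> lreg G h) f = lreg G (g \<otimes> h) f"
  proof (cases "f \<in> l2 (carrier G)")
    case True
    have l: "lreg G h f \<in> l2 (carrier G)" using lreg_l2[OF h True] by blast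
    have "inv h \<otimes> (inv g \<otimes> k) = inv (g \<otimes> h) \<otimes> k" if "k \<in> carrier G" for k
      using g h that by (simp add: inv_mult_group m_assoc)
    then show ?thesis using True l g h by (auto simp: lreg_apply fun_eq_iff)
  next
    case False
    then show ?thesis by (simp add: lreg_def l2_zero)
  qed
qed

lemma lreg_one: "lreg G \<one> = idop (carrier G)"
proof (rule ext)
  fix f show "lreg G \<one> f = idop (carrier G) f"
    by (cases "f \<in> l2 (carrier G)") (auto simp: lreg_apply idop_def lreg_def fun_eq_iff l2_outside)
qed

lemma lreg_adjoint: assumes g: "g \<in> carrier G"
  shows "is_adjoint (carrier G) (lreg G g) (lreg G (inv g))"
  unfolding is_adjoint_def
proof (intro ballI)
  fix f f' assume f: "f \<in> l2 (carrier G)" and f': "f' \<in> l2 (carrier G)"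
  have b: "bij_betw (\<lambda>k. g \<otimes> k) (carrier G) (carrier G)" by (rule bij_betw_mult_left[OF g])
  have "l2_inner (lreg G g f) f' = (\<Sum>\<^sub>\<infinity>h. if h \<in> carrier G then f (inv g \<otimes> h) * cnj (f' h) else 0)"
    unfolding l2_inner_def lreg_apply[OF f] by (rule infsum_cong) simp
  also have "\<dots> = (\<Sum>\<^sub>\<infinity>h\<in>carrier G. f (inv g \<otimes> h) * cnj (f' h))"
    by (rule infsum_cong_neutral) auto
  also have "\<dots> = (\<Sum>\<^sub>\<infinity>k\<in>carrier G. f (inv g \<otimes> (g \<otimes> k)) * cnj (f' (g \<otimes> k)))"
    by (rule infsum_reindex_bij_betw[OF b, symmetric])
  also have "\<dots> = (\<Sum>\<^sub>\<infinity>k\<in>carrier G. f k * cnj (lreg G (inv g) f' k))"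
    by (rule infsum_cong) (use g in \<open>simp add: lreg_apply[OF f'] m_assoc[symmetric]\<close>)
  also have "\<dots> = l2_inner f (lreg G (inv g) f')"
    unfolding l2_inner_def by (rule infsum_cong_neutral) (use f in \<open>auto simp: l2_outside\<close>)
  finally show "l2_inner (lreg G g f) f' = l2_inner f (lreg G (inv g) f')" .
qed

end

lemma op_entry_comp:
  assumes T: "T \<in> bop X" and S: "S \<in> bop X" and a: "a \<in> X" and b: "b \<in> X"
  shows "op_entry (T \<circ> S) a b = (\<Sum>\<^sub>\<infinity>k. op_entry S k b * op_entry T a k)"
proof -
  have l: "S (delta b) \<in> l2 X" by (rule bop_l2[OF S delta_l2[OF b]])
  have "op_entry (T \<circ> S) a b = T (S (delta b)) a" by (simp add: op_entry_def)
  also have "\<dots> = (\<Sum>\<^sub>\<infinity>k. S (delta b) k * op_entry T a k)" using op_apply_eq_infsum_entries[OF T l a] by simp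
  finally show ?thesis by (simp add: op_entry_def)
qed

lemma op_entry_add: "op_entry (op_add T S) a b = op_entry T a b + op_entry S a b"
  by (simp add: op_entry_def op_add_def)

lemma op_entry_scale: "op_entry (op_scale c T) a b = c * op_entry T a b"
  by (simp add: op_entry_def op_scale_def)

lemma norm_diff_less_all_imp_eq: assumes "\<And>e. e > 0 \<Longrightarrow> cmod (z - w) < e" shows "z = w"
  using norm_less_all_imp_zero[of "z - w"] assms by simp

section \<open>Operators with right-invariant matrices\<close>

lemma lreg_in_groupVN: "n \<in> N \<Longrightarrow> lreg G n \<in> groupVN G N"
  unfolding groupVN_def vN_gen_def by blast

definition right_invariant_op :: "('g, 'b) monoid_scheme \<Rightarrow> 'g op \<Rightarrow> bool" where
  "right_invariant_op G T \<longleftrightarrow> (\<forall>a\<in>carrier G. \<forall>b\<in>carrier G. \<forall>h\<in>carrier G.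
     op_entry T (a \<otimes>\<^bsub>G\<^esub> h) (b \<otimes>\<^bsub>G\<^esub> h) = op_entry T a b)"

text \<open>Right invariance of the matrix means commuting with the right regular representation,
  which characterises the elements of L(G); for R a b \<longleftrightarrow> a \<otimes> inv b \<in> N the set below plays
  the role of L(N).\<close>
definition conv_ops :: "('g, 'b) monoid_scheme \<Rightarrow> ('g \<Rightarrow> 'g \<Rightarrow> bool) \<Rightarrow> 'g op set" where
  "conv_ops G R = {T \<in> bop (carrier G). right_invariant_op G T \<and> (\<forall>a b. \<not> R a b \<longrightarrow> op_entry T a b = 0)}"

lemma conv_ops_bop: "T \<in> conv_ops G R \<Longrightarrow> T \<in> bop (carrier G)"
  by (simp add: conv_ops_def)

lemma conv_ops_right_invariant: "T \<in> conv_ops G R \<Longrightarrow> right_invariant_op G T"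
  by (simp add: conv_ops_def)

lemma conv_ops_support: "T \<in> conv_ops G R \<Longrightarrow> \<not> R a b \<Longrightarrow> op_entry T a b = 0"
  by (simp add: conv_ops_def)

lemma op_add_conv_ops: "T \<in> conv_ops G R \<Longrightarrow> S \<in> conv_ops G R \<Longrightarrow> op_add T S \<in> conv_ops G R"
  by (simp add: conv_ops_def right_invariant_op_def op_entry_add op_add_bop)

lemma op_scale_conv_ops: "T \<in> conv_ops G R \<Longrightarrow> op_scale c T \<in> conv_ops G R"
  by (simp add: conv_ops_def right_invariant_op_def op_entry_scale op_scale_bop)

context group begin

lemma right_invariant_entry:
  assumes T: "right_invariant_op G T" and p: "p \<in> carrier G" and q: "q \<in> carrier G"
  shows "op_entry T p q = op_entry T (p \<otimes> inv q) \<one>"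
proof -
  have "op_entry T ((p \<otimes> inv q) \<otimes> q) (\<one> \<otimes> q) = op_entry T (p \<otimes> inv q) \<one>"
    by (rule T[unfolded right_invariant_op_def, rule_format]) (use p q in simp_all)
  moreover have "(p \<otimes> inv q) \<otimes> q = p" using p q by (simp add: m_assoc)
  ultimately show ?thesis using q by simp
qed

lemma idop_conv_ops:
  assumes refl: "\<And>a. R a a"
  shows "idop (carrier G) \<in> conv_ops G R"
proof -
  have m: "op_entry (idop (carrier G)) a b = (if b \<in> carrier G then delta b a else 0)" for a b
    by (simp add: op_entry_def idop_def delta_l2 delta_not_l2)
  show ?thesis unfolding conv_ops_def right_invariant_op_def mem_Collect_eq
  proof (intro conjI ballI allI impI idop_bop)
    fix a b h assume "a \<in> carrier G" "b \<in> carrier G" "h \<in> carrier G"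
    then show "op_entry (idop (carrier G)) (a \<otimes> h) (b \<otimes> h) = op_entry (idop (carrier G)) a b"
      by (simp add: m delta_def)
  next
    fix a b assume "\<not> R a b"
    then have "a \<noteq> b" using refl by auto
    then show "op_entry (idop (carrier G)) a b = 0" by (simp add: m delta_def)
  qed
qed

lemma comp_conv_ops:
  assumes trans: "\<And>a b c. R a b \<Longrightarrow> R b c \<Longrightarrow> R a c"
    and T: "T \<in> conv_ops G R" and S: "S \<in> conv_ops G R"
  shows "T \<circ> S \<in> conv_ops G R"
proof -
  have Tb: "T \<in> bop (carrier G)" and Sb: "S \<in> bop (carrier G)"
    using T S by (auto simp: conv_ops_def)
  have TT: "\<And>a b h. a \<in> carrier G \<Longrightarrow> b \<in> carrier G \<Longrightarrow> h \<in> carrier G \<Longrightarrow> op_entry T (a \<otimes> h) (b \<otimes> h) = op_entry T a b"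
    and ST: "\<And>a b h. a \<in> carrier G \<Longrightarrow> b \<in> carrier G \<Longrightarrow> h \<in> carrier G \<Longrightarrow> op_entry S (a \<otimes> h) (b \<otimes> h) = op_entry S a b"
    using T S by (auto simp: conv_ops_def right_invariant_op_def)
  have TSb: "T \<circ> S \<in> bop (carrier G)" by (rule comp_bop[OF Tb Sb])
  have "op_entry (T \<circ> S) (a \<otimes> h) (b \<otimes> h) = op_entry (T \<circ> S) a b"
    if a: "a \<in> carrier G" and b: "b \<in> carrier G" and h: "h \<in> carrier G" for a b h
  proof -
    have bij: "bij_betw (\<lambda>k. k \<otimes> h) (carrier G) (carrier G)" by (rule bij_betw_mult_right[OF h])
    have "op_entry (T \<circ> S) (a \<otimes> h) (b \<otimes> h) = (\<Sum>\<^sub>\<infinity>k. op_entry S k (b \<otimes> h) * op_entry T (a \<otimes> h) k)"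
      using a b h by (intro op_entry_comp[OF Tb Sb]) auto
    also have "\<dots> = (\<Sum>\<^sub>\<infinity>k\<in>carrier G. op_entry S k (b \<otimes> h) * op_entry T (a \<otimes> h) k)"
      by (rule infsum_cong_neutral) (auto simp: op_entry_outside_row[OF Sb])
    also have "\<dots> = (\<Sum>\<^sub>\<infinity>k\<in>carrier G. op_entry S (k \<otimes> h) (b \<otimes> h) * op_entry T (a \<otimes> h) (k \<otimes> h))"
      by (rule infsum_reindex_bij_betw[OF bij, symmetric])
    also have "\<dots> = (\<Sum>\<^sub>\<infinity>k\<in>carrier G. op_entry S k b * op_entry T a k)"
      by (rule infsum_cong) (simp add: ST TT a b h)
    also have "\<dots> = (\<Sum>\<^sub>\<infinity>k. op_entry S k b * op_entry T a k)"
      by (rule infsum_cong_neutral) (auto simp: op_entry_outside_row[OF Sb])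
    also have "\<dots> = op_entry (T \<circ> S) a b" by (rule op_entry_comp[OF Tb Sb a b, symmetric])
    finally show ?thesis .
  qed
  moreover have "op_entry (T \<circ> S) a b = 0" if nr: "\<not> R a b" for a b
  proof (cases "a \<in> carrier G \<and> b \<in> carrier G")
    case True
    have z: "op_entry S k b * op_entry T a k = 0" for k
    proof (cases "R k b")
      case True
      then have "\<not> R a k" using nr trans by blast
      then show ?thesis by (simp add: conv_ops_support[OF T])
    qed (simp add: conv_ops_support[OF S])
    show ?thesis
      using True by (simp only: op_entry_comp[OF Tb Sb conjunct1[OF True] conjunct2[OF True]] z infsum_0_simp)
  next
    case False
    then show ?thesis using TSb by (auto simp: op_entry_outside_col op_entry_outside_row)
  qed
  ultimately show ?thesis using TSb by (simp add: conv_ops_def right_invariant_op_def)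
qed

lemma adjoint_op_conv_ops:
  assumes sym: "\<And>a b. R a b \<Longrightarrow> R b a" and T: "T \<in> conv_ops G R"
  shows "adjoint_op (carrier G) T \<in> conv_ops G R" "is_adjoint (carrier G) T (adjoint_op (carrier G) T)"
proof -
  let ?S = "adjoint_op (carrier G) T"
  have Tb: "T \<in> bop (carrier G)" by (rule conv_ops_bop[OF T])
  have Sb: "?S \<in> bop (carrier G)" by (rule adjoint_op_bop[OF Tb])
  show adj: "is_adjoint (carrier G) T ?S"
    using l2_inner_adjoint_op[OF Tb] by (simp add: is_adjoint_def)
  have m: "op_entry ?S a b = (if a \<in> carrier G \<and> b \<in> carrier G then cnj (op_entry T b a) else 0)" for a b
    using is_adjoint_entry[OF Sb adj] op_entry_outside_col[OF Sb] op_entry_outside_row[OF Sb] by auto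
  show "?S \<in> conv_ops G R"
    unfolding conv_ops_def right_invariant_op_def mem_Collect_eq
  proof (intro conjI ballI allI impI Sb)
    fix a b h assume "a \<in> carrier G" "b \<in> carrier G" "h \<in> carrier G"
    then show "op_entry ?S (a \<otimes> h) (b \<otimes> h) = op_entry ?S a b"
      using conv_ops_right_invariant[OF T] by (simp add: m right_invariant_op_def)
  next
    fix a b assume "\<not> R a b"
    then have "\<not> R b a" using sym by blast
    then show "op_entry ?S a b = 0" by (simp add: m conv_ops_support[OF T])
  qed
qed

lemma conv_ops_entries_approx:
  assumes ap: "\<forall>F. finite F \<longrightarrow> F \<subseteq> l2 (carrier G) \<times> l2 (carrier G) \<longrightarrow> (\<forall>\<epsilon>>0. \<exists>S\<in>conv_ops G R.
            \<forall>(f, g)\<in>F. cmod (l2_inner (\<lambda>x. T f x - S f x) g) < \<epsilon>)"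
    and P: "finite P" "P \<subseteq> carrier G \<times> carrier G" and e: "e > 0"
  shows "\<exists>S\<in>conv_ops G R. \<forall>(a, b)\<in>P. cmod (op_entry T a b - op_entry S a b) < e"
proof -
  let ?F = "(\<lambda>(a, b). (delta b, delta a)) ` P"
  have fin: "finite ?F" and sub: "?F \<subseteq> l2 (carrier G) \<times> l2 (carrier G)" using P by (auto intro: delta_l2)
  have "\<exists>S\<in>conv_ops G R. \<forall>(f, g)\<in>?F. cmod (l2_inner (\<lambda>x. T f x - S f x) g) < e"
    using ap[rule_format, OF fin sub e] .
  then obtain S where S: "S \<in> conv_ops G R"
    and c: "\<forall>(f, g)\<in>?F. cmod (l2_inner (\<lambda>x. T f x - S f x) g) < e" ..
  have "cmod (op_entry T a b - op_entry S a b) < e" if "(a, b) \<in> P" for a b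
  proof -
    have "(delta b, delta a) \<in> ?F" using that by force
    then have "cmod (l2_inner (\<lambda>x. T (delta b) x - S (delta b) x) (delta a)) < e" using c by blast
    then show ?thesis by (simp add: l2_inner_delta_right op_entry_def)
  qed
  then show ?thesis using S by blast
qed

lemma conv_ops_wot_closed: "wot_closed (carrier G) (conv_ops G R)"
  unfolding wot_closed_def
proof (intro ballI impI)
  fix T assume Tb: "T \<in> bop (carrier G)"
  assume ap: "\<forall>F. finite F \<longrightarrow> F \<subseteq> l2 (carrier G) \<times> l2 (carrier G) \<longrightarrow> (\<forall>\<epsilon>>0. \<exists>S\<in>conv_ops G R.
          \<forall>(f, g)\<in>F. cmod (l2_inner (\<lambda>x. T f x - S f x) g) < \<epsilon>)"
  note approx = conv_ops_entries_approx[OF ap]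
  have "op_entry T (a \<otimes> h) (b \<otimes> h) = op_entry T a b"
    if a: "a \<in> carrier G" and b: "b \<in> carrier G" and h: "h \<in> carrier G" for a b h
  proof (rule norm_diff_less_all_imp_eq)
    fix e :: real assume e: "e > 0"
    have "finite {(a \<otimes> h, b \<otimes> h), (a, b)}" "{(a \<otimes> h, b \<otimes> h), (a, b)} \<subseteq> carrier G \<times> carrier G" "e / 2 > 0"
      using a b h e by auto
    then obtain S where S: "S \<in> conv_ops G R"
      and c: "\<forall>(x, y)\<in>{(a \<otimes> h, b \<otimes> h), (a, b)}. cmod (op_entry T x y - op_entry S x y) < e / 2"
      using approx by blast
    have c1: "cmod (op_entry T (a \<otimes> h) (b \<otimes> h) - op_entry S (a \<otimes> h) (b \<otimes> h)) < e / 2"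
      and c2: "cmod (op_entry T a b - op_entry S a b) < e / 2" using c by blast+
    have eq: "op_entry S (a \<otimes> h) (b \<otimes> h) = op_entry S a b"
      using conv_ops_right_invariant[OF S] a b h by (simp add: right_invariant_op_def)
    have "cmod (op_entry T (a \<otimes> h) (b \<otimes> h) - op_entry T a b)
        \<le> cmod (op_entry T (a \<otimes> h) (b \<otimes> h) - op_entry S (a \<otimes> h) (b \<otimes> h)) + cmod (op_entry T a b - op_entry S a b)"
    proof -
      have "op_entry T (a \<otimes> h) (b \<otimes> h) - op_entry T a b
          = (op_entry T (a \<otimes> h) (b \<otimes> h) - op_entry S a b) - (op_entry T a b - op_entry S a b)"
        by simp
      then show ?thesis unfolding eq by (metis norm_triangle_ineq4)
    qed
    then show "cmod (op_entry T (a \<otimes> h) (b \<otimes> h) - op_entry T a b) < e" using c1 c2 by linarith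
  qed
  moreover have "op_entry T a b = 0" if nr: "\<not> R a b" for a b
  proof (cases "a \<in> carrier G \<and> b \<in> carrier G")
    case True
    show ?thesis
    proof (rule norm_less_all_imp_zero)
      fix e :: real assume e: "e > 0"
      have "finite {(a, b)}" "{(a, b)} \<subseteq> carrier G \<times> carrier G" using True by auto
      then obtain S where S: "S \<in> conv_ops G R" and "\<forall>(x, y)\<in>{(a, b)}. cmod (op_entry T x y - op_entry S x y) < e"
        using approx e by blast
      then have c: "cmod (op_entry T a b - op_entry S a b) < e" by blast
      then show "cmod (op_entry T a b) < e" using conv_ops_support[OF S nr] by simp
    qed
  next
    case False
    then show ?thesis using Tb by (auto simp: op_entry_outside_col op_entry_outside_row)
  qed
  ultimately show "T \<in> conv_ops G R" using Tb by (simp add: conv_ops_def right_invariant_op_def)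
qed

lemma conv_ops_vNa:
  assumes refl: "\<And>a. R a a" and sym: "\<And>a b. R a b \<Longrightarrow> R b a"
    and trans: "\<And>a b c. R a b \<Longrightarrow> R b c \<Longrightarrow> R a c"
  shows "vNa (carrier G) (conv_ops G R)"
  unfolding vNa_def
proof (intro conjI ballI allI)
  show "conv_ops G R \<subseteq> bop (carrier G)" using conv_ops_bop by blast
  show "idop (carrier G) \<in> conv_ops G R" using refl by (rule idop_conv_ops)
  show "wot_closed (carrier G) (conv_ops G R)" by (rule conv_ops_wot_closed)
next
  fix T S assume T: "T \<in> conv_ops G R" and S: "S \<in> conv_ops G R"
  show "op_add T S \<in> conv_ops G R" by (rule op_add_conv_ops[OF T S])
  show "T \<circ> S \<in> conv_ops G R" by (rule comp_conv_ops[OF trans T S])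
next
  fix T c assume "T \<in> conv_ops G R"
  then show "op_scale c T \<in> conv_ops G R" by (rule op_scale_conv_ops)
next
  fix T assume "T \<in> conv_ops G R"
  then show "\<exists>S\<in>conv_ops G R. is_adjoint (carrier G) T S" using adjoint_op_conv_ops[of R, OF sym] by blast
qed

lemma lreg_conv_ops:
  assumes n: "n \<in> carrier G" and NR: "\<And>b. b \<in> carrier G \<Longrightarrow> R (n \<otimes> b) b"
  shows "lreg G n \<in> conv_ops G R"
proof -
  have m: "op_entry (lreg G n) a b = (if b \<in> carrier G then delta (n \<otimes> b) a else 0)" for a b
  proof (cases "b \<in> carrier G")
    case True then show ?thesis by (simp add: op_entry_def lreg_delta[OF n True])
  next
    case False then show ?thesis by (simp add: op_entry_def lreg_def delta_not_l2)
  qed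
  show ?thesis unfolding conv_ops_def right_invariant_op_def mem_Collect_eq
  proof (intro conjI ballI allI impI)
    show "lreg G n \<in> bop (carrier G)" by (rule lreg_bop[OF n])
  next
    fix a b h assume a: "a \<in> carrier G" and b: "b \<in> carrier G" and h: "h \<in> carrier G"
    have "(a \<otimes> h = n \<otimes> (b \<otimes> h)) \<longleftrightarrow> (a = n \<otimes> b)"
      using a b h n by (simp add: m_assoc[symmetric])
    then show "op_entry (lreg G n) (a \<otimes> h) (b \<otimes> h) = op_entry (lreg G n) a b"
      using a b h by (simp add: m delta_def)
  next
    fix a b assume nr: "\<not> R a b"
    show "op_entry (lreg G n) a b = 0"
    proof (cases "b \<in> carrier G")
      case True
      then have "a \<noteq> n \<otimes> b" using NR nr by blast
      then show ?thesis using True by (simp add: m delta_def)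
    qed (simp add: m)
  qed
qed

lemma groupVN_subset_conv_ops:
  assumes "\<And>a. R a a" and "\<And>a b. R a b \<Longrightarrow> R b a" and "\<And>a b c. R a b \<Longrightarrow> R b c \<Longrightarrow> R a c"
    and N: "N \<subseteq> carrier G" and NR: "\<And>n b. n \<in> N \<Longrightarrow> b \<in> carrier G \<Longrightarrow> R (n \<otimes> b) b"
  shows "groupVN G N \<subseteq> conv_ops G R"
proof -
  have "lreg G ` N \<subseteq> conv_ops G R" using N NR lreg_conv_ops by blast
  moreover have "vNa (carrier G) (conv_ops G R)" using assms(1-3) by (rule conv_ops_vNa)
  ultimately show ?thesis unfolding groupVN_def vN_gen_def by blast
qed

end

lemma op_eq_scale_idop_if_diagonal:
  assumes T: "T \<in> bop X" and diag: "\<And>a b. a \<in> X \<Longrightarrow> op_entry T a b = (if b = a then c else 0)"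
  shows "T = op_scale c (idop X)"
proof (intro ext)
  fix f a
  show "T f a = op_scale c (idop X) f a"
  proof (cases "f \<in> l2 X \<and> a \<in> X")
    case True
    then have "T f a = (\<Sum>\<^sub>\<infinity>b. f b * op_entry T a b)" using op_apply_eq_infsum_entries[OF T] by blast
    also have "\<dots> = (\<Sum>b\<in>{a}. f b * op_entry T a b)"
      by (rule infsum_finite_support) (simp_all add: diag True)
    finally show ?thesis using True by (simp add: diag op_scale_def idop_def)
  next
    case False
    then show ?thesis
      by (auto simp: op_scale_def idop_def bop_out[OF T] bop_outside[OF T] l2_outside)
  qed
qed

context group begin

lemma right_invariant_scalar:
  assumes T: "T \<in> bop (carrier G)" "right_invariant_op G T"
    and off_one: "\<And>k. k \<in> carrier G \<Longrightarrow> k \<noteq> \<one> \<Longrightarrow> op_entry T k \<one> = 0"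
  shows "T \<in> scalars (carrier G)"
proof -
  have "op_entry T a b = (if b = a then op_entry T \<one> \<one> else 0)" if a: "a \<in> carrier G" for a b
  proof (cases "b \<in> carrier G")
    case True
    have "a \<otimes> inv b = \<one> \<longleftrightarrow> a = b" using inv_solve_right'[of \<one> a b] a True by simp
    then show ?thesis
      using right_invariant_entry[OF T(2) a True] off_one[of "a \<otimes> inv b"] a True by auto
  next
    case False
    then show ?thesis using a op_entry_outside_col[OF T(1) False] by auto
  qed
  then have "T = op_scale (op_entry T \<one> \<one>) (idop (carrier G))"
    by (rule op_eq_scale_idop_if_diagonal[OF T(1)])
  then show ?thesis unfolding scalars_def by blast
qed

end

section \<open>Averages of conjugates\<close>

lemma l2_inner_trunc_right: assumes F: "finite F" shows "l2_inner u (trunc F g) = (\<Sum>a\<in>F. u a * cnj (g a))"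
proof -
  have "l2_inner u (trunc F g) = (\<Sum>x\<in>F. u x * cnj (trunc F g x))"
    unfolding l2_inner_def by (rule infsum_finite_support[OF F]) (auto simp: trunc_def)
  also have "\<dots> = (\<Sum>a\<in>F. u a * cnj (g a))" by (rule sum.cong) (auto simp: trunc_def)
  finally show ?thesis .
qed

lemma obtain_trunc_approx:
  assumes f: "f \<in> l2 X" and g: "g \<in> l2 X" and eta: "\<eta> > 0"
  obtains A where "finite A" "A \<subseteq> X" "l2_norm (\<lambda>x. f x - trunc A f x) < \<eta>"
    "l2_norm (\<lambda>x. g x - trunc A g x) < \<eta>"
proof -
  have ef: "eventually (\<lambda>F. l2_norm (\<lambda>x. f x - trunc F f x) < \<eta>) (finite_subsets_at_top UNIV)"
    by (rule order_tendstoD(2)[OF l2_norm_trunc_remainder_tendsto[OF f] eta])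
  have eg: "eventually (\<lambda>F. l2_norm (\<lambda>x. g x - trunc F g x) < \<eta>) (finite_subsets_at_top UNIV)"
    by (rule order_tendstoD(2)[OF l2_norm_trunc_remainder_tendsto[OF g] eta])
  have "eventually (\<lambda>F. l2_norm (\<lambda>x. f x - trunc F f x) < \<eta> \<and> l2_norm (\<lambda>x. g x - trunc F g x) < \<eta>)
      (finite_subsets_at_top UNIV)" using ef eg by (rule eventually_conj)
  then obtain F0 where F0: "finite F0"
    "\<And>Y. finite Y \<Longrightarrow> F0 \<subseteq> Y \<Longrightarrow> l2_norm (\<lambda>x. f x - trunc Y f x) < \<eta> \<and> l2_norm (\<lambda>x. g x - trunc Y g x) < \<eta>"
    unfolding eventually_finite_subsets_at_top by auto
  have c: "l2_norm (\<lambda>x. f x - trunc F0 f x) < \<eta> \<and> l2_norm (\<lambda>x. g x - trunc F0 g x) < \<eta>"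
    using F0 by blast
  have tf: "trunc (F0 \<inter> X) f = trunc F0 f" by (rule ext) (auto simp: trunc_def l2_outside[OF f])
  have tg: "trunc (F0 \<inter> X) g = trunc F0 g" by (rule ext) (auto simp: trunc_def l2_outside[OF g])
  show ?thesis by (rule that[of "F0 \<inter> X"]) (use F0(1) c tf tg in auto)
qed

lemma l2_inner_op_diff_le:
  assumes Z: "Z \<in> bop X" and B: "B \<ge> 0" "\<And>u. u \<in> l2 X \<Longrightarrow> l2_norm (Z u) \<le> B * l2_norm u"
    and f: "f \<in> l2 X" and f0: "f0 \<in> l2 X" and g: "g \<in> l2 X" and g0: "g0 \<in> l2 X"
  shows "cmod (l2_inner (Z f) g - l2_inner (Z f0) g0)
    \<le> B * (l2_norm (\<lambda>x. f x - f0 x) * l2_norm g + l2_norm f0 * l2_norm (\<lambda>x. g x - g0 x))"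
proof -
  have df: "(\<lambda>x. f x - f0 x) \<in> l2 X" by (rule l2_diff[OF f f0])
  have dg: "(\<lambda>x. g x - g0 x) \<in> l2 X" by (rule l2_diff[OF g g0])
  have "l2_inner (Z f) g - l2_inner (Z f0) g = l2_inner (\<lambda>x. Z f x - Z f0 x) g"
    by (rule l2_inner_diff_left[where X=X, symmetric]) (simp_all add: bop_l2[OF Z] f f0 g)
  also have "(\<lambda>x. Z f x - Z f0 x) = Z (\<lambda>x. f x - f0 x)"
    by (rule bop_minus[OF Z f f0, symmetric])
  finally have e1: "l2_inner (Z f) g - l2_inner (Z f0) g = l2_inner (Z (\<lambda>x. f x - f0 x)) g" .
  have e2: "l2_inner (Z f0) g - l2_inner (Z f0) g0 = l2_inner (Z f0) (\<lambda>x. g x - g0 x)"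
    by (rule l2_inner_diff_right[where X=X, symmetric]) (simp_all add: bop_l2[OF Z] f0 g g0)
  have b1: "cmod (l2_inner (Z (\<lambda>x. f x - f0 x)) g) \<le> B * l2_norm (\<lambda>x. f x - f0 x) * l2_norm g"
    using l2_Cauchy_Schwarz[OF bop_l2[OF Z df] g] mult_right_mono[OF B(2)[OF df] l2_norm_nonneg]
    by (rule order_trans)
  have b2: "cmod (l2_inner (Z f0) (\<lambda>x. g x - g0 x)) \<le> B * l2_norm f0 * l2_norm (\<lambda>x. g x - g0 x)"
    using l2_Cauchy_Schwarz[OF bop_l2[OF Z f0] dg] mult_right_mono[OF B(2)[OF f0] l2_norm_nonneg]
    by (rule order_trans)
  have "l2_inner (Z f) g - l2_inner (Z f0) g0
      = l2_inner (Z (\<lambda>x. f x - f0 x)) g + l2_inner (Z f0) (\<lambda>x. g x - g0 x)"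
    using e1 e2 by (simp add: algebra_simps)
  then show ?thesis
    using b1 b2 norm_triangle_ineq[of "l2_inner (Z (\<lambda>x. f x - f0 x)) g" "l2_inner (Z f0) (\<lambda>x. g x - g0 x)"]
    by (simp add: algebra_simps)
qed

lemma norm_sum_comp_inj_le:
  assumes c: "c \<in> l2 X" and t: "inj_on t {..<K}"
  shows "cmod (\<Sum>i<K. c (t i)) \<le> sqrt (real K) * l2_norm c"
proof -
  have squares: "(\<Sum>i<K. (cmod (c (t i)))\<^sup>2) \<le> (l2_norm c)\<^sup>2"
  proof -
    have "(\<Sum>i<K. (cmod (c (t i)))\<^sup>2) = (\<Sum>y\<in>t ` {..<K}. abs_sq c y)"
      by (simp add: sum.reindex[OF t] abs_sq_def)
    also have "\<dots> \<le> (l2_norm c)\<^sup>2"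
      unfolding l2_norm_power2
      by (rule finite_sum_le_infsum[OF abs_sq_summable[OF c]]) (simp_all add: abs_sq_nonneg)
    finally show ?thesis .
  qed
  have "(\<Sum>i<K. cmod (c (t i)))\<^sup>2 \<le> real K * (\<Sum>i<K. (cmod (c (t i)))\<^sup>2)"
    using Cauchy_Schwarz_ineq_sum[of "\<lambda>_. 1" "\<lambda>i. cmod (c (t i))" "{..<K}"] by simp
  also have "\<dots> \<le> real K * (l2_norm c)\<^sup>2" using squares by (rule mult_left_mono) simp
  also have "\<dots> = (sqrt (real K) * l2_norm c)\<^sup>2" by (simp add: power_mult_distrib)
  finally have "(\<Sum>i<K. cmod (c (t i))) \<le> sqrt (real K) * l2_norm c"
    by (rule power2_le_imp_le) (simp add: l2_norm_nonneg)
  then show ?thesis using norm_sum[of "\<lambda>i. c (t i)" "{..<K}"] by linarith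
qed

lemma sqrt_mult_le_half:
  fixes L \<epsilon> :: real
  assumes e: "\<epsilon> > 0" and K: "(2 * L / \<epsilon>)\<^sup>2 \<le> real K"
  shows "sqrt (real K) * L \<le> \<epsilon> * real K / 2"
proof -
  have "2 * L / \<epsilon> \<le> sqrt (real K)" using K by (rule real_le_rsqrt)
  then have "2 * L \<le> \<epsilon> * sqrt (real K)" using e by (simp add: divide_le_eq mult.commute)
  then have "sqrt (real K) * (2 * L) \<le> sqrt (real K) * (\<epsilon> * sqrt (real K))"
    by (rule mult_left_mono) simp
  also have "\<dots> = \<epsilon> * real K" by simp
  finally show ?thesis by simp
qed

definition conj_op :: "('g, 'b) monoid_scheme \<Rightarrow> 'g \<Rightarrow> 'g op \<Rightarrow> 'g op" where
  "conj_op G h A = lreg G h \<circ> A \<circ> lreg G (inv\<^bsub>G\<^esub> h)"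

primrec op_sum :: "'a set \<Rightarrow> nat \<Rightarrow> (nat \<Rightarrow> 'a op) \<Rightarrow> 'a op" where
  "op_sum X 0 A = op_scale 0 (idop X)"
| "op_sum X (Suc K) A = op_add (op_sum X K A) (A K)"

lemma op_sum_apply: "op_sum X K A f = (\<lambda>x. \<Sum>i<K. A i f x)"
  by (induction K) (simp_all add: op_scale_def op_add_def)

lemma op_sum_in_vNa: "vNa X M \<Longrightarrow> (\<And>i. A i \<in> M) \<Longrightarrow> op_sum X K A \<in> M"
  by (induction K) (simp_all add: vNa_def)

context group begin

lemma conj_op_bop: "h \<in> carrier G \<Longrightarrow> A \<in> bop (carrier G) \<Longrightarrow> conj_op G h A \<in> bop (carrier G)"
  unfolding conj_op_def by (intro comp_bop lreg_bop) auto

lemma conj_op_lreg: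
  assumes "h \<in> carrier G" "k \<in> carrier G"
  shows "conj_op G h (lreg G k) = lreg G (h \<otimes> k \<otimes> inv h)"
  using assms by (simp add: conj_op_def lreg_comp)

lemma G_invariant_conj_op:
  assumes "G_invariant G M" and h: "h \<in> carrier G" and "T \<in> M"
  shows "conj_op G h T \<in> M"
proof -
  have "lreg G (inv h) \<in> bop (carrier G)" using h by (simp add: lreg_bop)
  moreover have "is_adjoint (carrier G) (lreg G h) (lreg G (inv h))" by (rule lreg_adjoint[OF h])
  ultimately show ?thesis using assms unfolding G_invariant_def conj_op_def by blast
qed

lemma conj_op_bound:
  assumes h: "h \<in> carrier G" and A: "A \<in> bop (carrier G)"
    and B: "\<And>f. f \<in> l2 (carrier G) \<Longrightarrow> l2_norm (A f) \<le> B * l2_norm f"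
    and f: "f \<in> l2 (carrier G)"
  shows "l2_norm (conj_op G h A f) \<le> B * l2_norm f"
proof -
  have ih: "inv h \<in> carrier G" using h by simp
  have l1: "lreg G (inv h) f \<in> l2 (carrier G)" and n1: "l2_norm (lreg G (inv h) f) = l2_norm f"
    using lreg_l2[OF ih f] by auto
  have l2: "A (lreg G (inv h) f) \<in> l2 (carrier G)" by (rule bop_l2[OF A l1])
  have "l2_norm (conj_op G h A f) = l2_norm (A (lreg G (inv h) f))"
    using lreg_l2[OF h l2] by (simp add: conj_op_def)
  also have "\<dots> \<le> B * l2_norm f" using B[OF l1] n1 by simp
  finally show ?thesis .
qed

lemma op_entry_conj_op:
  assumes h: "h \<in> carrier G" and A: "A \<in> bop (carrier G)" and a: "a \<in> carrier G" and b: "b \<in> carrier G"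
  shows "op_entry (conj_op G h A) a b = op_entry A (inv h \<otimes> a) (inv h \<otimes> b)"
proof -
  have ih: "inv h \<in> carrier G" using h by simp
  have l: "A (delta (inv h \<otimes> b)) \<in> l2 (carrier G)" using ih b by (intro bop_l2[OF A] delta_l2) simp
  have "op_entry (conj_op G h A) a b = lreg G h (A (delta (inv h \<otimes> b))) a"
    by (simp add: op_entry_def conj_op_def lreg_delta[OF ih b])
  also have "\<dots> = A (delta (inv h \<otimes> b)) (inv h \<otimes> a)" using a by (simp add: lreg_apply[OF l])
  finally show ?thesis by (simp add: op_entry_def)
qed

lemma op_entry_conj_op_one:
  assumes A: "A \<in> bop (carrier G)" "right_invariant_op G A"
    and h: "h \<in> carrier G" and a: "a \<in> carrier G" and b: "b \<in> carrier G"
  shows "op_entry (conj_op G h A) a b = op_entry A (inv h \<otimes> (a \<otimes> inv b) \<otimes> h) \<one>"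
proof -
  have "op_entry A (inv h \<otimes> a) (inv h \<otimes> b) = op_entry A ((inv h \<otimes> a) \<otimes> inv (inv h \<otimes> b)) \<one>"
    by (rule right_invariant_entry[OF A(2)]) (use h a b in simp_all)
  then have "op_entry (conj_op G h A) a b = op_entry A ((inv h \<otimes> a) \<otimes> inv (inv h \<otimes> b)) \<one>"
    using op_entry_conj_op[OF h A(1) a b] by simp
  moreover have "(inv h \<otimes> a) \<otimes> inv (inv h \<otimes> b) = inv h \<otimes> (a \<otimes> inv b) \<otimes> h"
    using h a b by (simp add: inv_mult_group m_assoc)
  ultimately show ?thesis by simp
qed

lemma l2_inner_conj_op_trunc:
  assumes A: "A \<in> bop (carrier G)" "right_invariant_op G A" and h: "h \<in> carrier G"
    and F: "finite F" "F \<subseteq> carrier G"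
  shows "l2_inner (conj_op G h A (trunc F f)) (trunc F g)
    = (\<Sum>a\<in>F. \<Sum>b\<in>F. f b * cnj (g a) * op_entry A (inv h \<otimes> (a \<otimes> inv b) \<otimes> h) \<one>)"
proof -
  have Z: "conj_op G h A \<in> bop (carrier G)" by (rule conj_op_bop[OF h A(1)])
  have entry: "conj_op G h A (delta b) a = op_entry A (inv h \<otimes> (a \<otimes> inv b) \<otimes> h) \<one>"
    if "a \<in> F" "b \<in> F" for a b
    using op_entry_conj_op_one[OF A h, of a b] that F(2) by (auto simp: op_entry_def)
  have "l2_inner (conj_op G h A (trunc F f)) (trunc F g) = (\<Sum>a\<in>F. conj_op G h A (trunc F f) a * cnj (g a))"
    by (rule l2_inner_trunc_right[OF F(1)])
  also have "\<dots> = (\<Sum>a\<in>F. (\<Sum>b\<in>F. f b * conj_op G h A (delta b) a) * cnj (g a))"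
    unfolding bop_trunc[OF Z F] ..
  also have "\<dots> = (\<Sum>a\<in>F. \<Sum>b\<in>F. f b * cnj (g a) * op_entry A (inv h \<otimes> (a \<otimes> inv b) \<otimes> h) \<one>)"
    unfolding sum_distrib_right by (intro sum.cong refl) (simp add: entry mult_ac)
  finally show ?thesis .
qed

text \<open>On finitely supported vectors the sum of K conjugates only sees the coefficient function
  A (delta 1) along the conjugation orbits of the finitely many quotients a \<otimes> inv b: an orbit
  avoiding its support contributes nothing, and an injective one at most sqrt K times its l2 norm.\<close>
lemma sum_l2_inner_conj_op_trunc_le:
  assumes A: "A \<in> bop (carrier G)" "right_invariant_op G A" and hs: "\<And>i. hs i \<in> carrier G"
    and F: "finite F" "F \<subseteq> carrier G"
    and orbits: "\<And>a b. a \<in> F \<Longrightarrow> b \<in> F \<Longrightarrow>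
      (\<forall>i. op_entry A (inv (hs i) \<otimes> (a \<otimes> inv b) \<otimes> hs i) \<one> = 0) \<or> inj (\<lambda>i. inv (hs i) \<otimes> (a \<otimes> inv b) \<otimes> hs i)"
  shows "cmod (\<Sum>i<K. l2_inner (conj_op G (hs i) A (trunc F f)) (trunc F g))
    \<le> sqrt (real K) * ((\<Sum>a\<in>F. \<Sum>b\<in>F. cmod (f b) * cmod (g a)) * l2_norm (A (delta \<one>)))"
proof -
  define c where "c = A (delta \<one>)"
  have c: "c \<in> l2 (carrier G)" unfolding c_def by (rule bop_l2[OF A(1) delta_l2]) simp
  define t where "t a b i = inv (hs i) \<otimes> (a \<otimes> inv b) \<otimes> hs i" for a b i
  have orbit_sum: "cmod (\<Sum>i<K. c (t a b i)) \<le> sqrt (real K) * l2_norm c" if "a \<in> F" "b \<in> F" for a b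
    using orbits[OF that]
  proof
    assume "\<forall>i. op_entry A (inv (hs i) \<otimes> (a \<otimes> inv b) \<otimes> hs i) \<one> = 0"
    then show ?thesis by (simp add: t_def c_def op_entry_def l2_norm_nonneg)
  next
    assume "inj (\<lambda>i. inv (hs i) \<otimes> (a \<otimes> inv b) \<otimes> hs i)"
    then have "inj_on (t a b) {..<K}" by (simp add: t_def inj_on_def inj_def)
    then show ?thesis by (rule norm_sum_comp_inj_le[OF c])
  qed
  have "(\<Sum>i<K. l2_inner (conj_op G (hs i) A (trunc F f)) (trunc F g))
      = (\<Sum>i<K. \<Sum>a\<in>F. \<Sum>b\<in>F. f b * cnj (g a) * c (t a b i))"
    by (simp add: l2_inner_conj_op_trunc[OF A hs F] t_def c_def op_entry_def)
  also have "\<dots> = (\<Sum>a\<in>F. \<Sum>i<K. \<Sum>b\<in>F. f b * cnj (g a) * c (t a b i))"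
    by (rule sum.swap)
  also have "\<dots> = (\<Sum>a\<in>F. \<Sum>b\<in>F. \<Sum>i<K. f b * cnj (g a) * c (t a b i))"
    by (rule sum.cong[OF refl]) (rule sum.swap)
  also have "\<dots> = (\<Sum>a\<in>F. \<Sum>b\<in>F. f b * cnj (g a) * (\<Sum>i<K. c (t a b i)))"
    by (simp add: sum_distrib_left)
  finally have "cmod (\<Sum>i<K. l2_inner (conj_op G (hs i) A (trunc F f)) (trunc F g))
      \<le> (\<Sum>a\<in>F. \<Sum>b\<in>F. cmod (f b * cnj (g a) * (\<Sum>i<K. c (t a b i))))"
    by (simp only:) (rule order_trans[OF norm_sum sum_mono], rule norm_sum)
  also have "\<dots> \<le> (\<Sum>a\<in>F. \<Sum>b\<in>F. cmod (f b) * cmod (g a) * (sqrt (real K) * l2_norm c))"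
    by (intro sum_mono) (simp add: norm_mult orbit_sum mult_left_mono)
  also have "\<dots> = sqrt (real K) * ((\<Sum>a\<in>F. \<Sum>b\<in>F. cmod (f b) * cmod (g a)) * l2_norm c)"
    by (simp add: sum_distrib_right sum_distrib_left mult_ac)
  finally show ?thesis by (simp add: c_def)
qed

lemma l2_inner_conj_op_trunc_diff_le:
  assumes A: "A \<in> bop (carrier G)"
    and B: "B \<ge> 0" "\<And>f. f \<in> l2 (carrier G) \<Longrightarrow> l2_norm (A f) \<le> B * l2_norm f"
    and h: "h \<in> carrier G" and F: "finite F" "F \<subseteq> carrier G"
    and f: "f \<in> l2 (carrier G)" and g: "g \<in> l2 (carrier G)"
    and \<eta>: "l2_norm (\<lambda>x. f x - trunc F f x) \<le> \<eta>" "l2_norm (\<lambda>x. g x - trunc F g x) \<le> \<eta>"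
  shows "cmod (l2_inner (conj_op G h A f) g - l2_inner (conj_op G h A (trunc F f)) (trunc F g))
    \<le> B * \<eta> * (l2_norm f + l2_norm g)"
proof -
  have \<eta>0: "0 \<le> \<eta>" using \<eta>(1) l2_norm_nonneg order_trans by blast
  have "cmod (l2_inner (conj_op G h A f) g - l2_inner (conj_op G h A (trunc F f)) (trunc F g))
      \<le> B * (l2_norm (\<lambda>x. f x - trunc F f x) * l2_norm g
             + l2_norm (trunc F f) * l2_norm (\<lambda>x. g x - trunc F g x))"
    by (rule l2_inner_op_diff_le[OF conj_op_bop[OF h A] B(1) conj_op_bound[OF h A B(2)]
          f trunc_l2[OF F] g trunc_l2[OF F]])
  also have "\<dots> \<le> B * (\<eta> * l2_norm g + l2_norm f * \<eta>)"
    using \<eta> \<eta>0 l2_norm_trunc_le[OF f F(1)] B(1)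
    by (intro mult_left_mono add_mono mult_mono) (simp_all add: l2_norm_nonneg)
  also have "\<dots> = B * \<eta> * (l2_norm f + l2_norm g)" by (simp add: algebra_simps)
  finally show ?thesis .
qed

lemma sum_l2_inner_conj_op_le:
  assumes A: "A \<in> bop (carrier G)" "right_invariant_op G A"
    and B: "B \<ge> 0" "\<And>f. f \<in> l2 (carrier G) \<Longrightarrow> l2_norm (A f) \<le> B * l2_norm f"
    and hs: "\<And>i. hs i \<in> carrier G" and F: "finite F" "F \<subseteq> carrier G"
    and f: "f \<in> l2 (carrier G)" and g: "g \<in> l2 (carrier G)"
    and \<eta>: "l2_norm (\<lambda>x. f x - trunc F f x) \<le> \<eta>" "l2_norm (\<lambda>x. g x - trunc F g x) \<le> \<eta>"
    and orbits: "\<And>a b. a \<in> F \<Longrightarrow> b \<in> F \<Longrightarrow>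
      (\<forall>i. op_entry A (inv (hs i) \<otimes> (a \<otimes> inv b) \<otimes> hs i) \<one> = 0) \<or> inj (\<lambda>i. inv (hs i) \<otimes> (a \<otimes> inv b) \<otimes> hs i)"
  shows "cmod (\<Sum>i<K. l2_inner (conj_op G (hs i) A f) g)
    \<le> sqrt (real K) * ((\<Sum>a\<in>F. \<Sum>b\<in>F. cmod (f b) * cmod (g a)) * l2_norm (A (delta \<one>)))
      + real K * (B * \<eta> * (l2_norm f + l2_norm g))"
proof -
  let ?Z = "\<lambda>i. conj_op G (hs i) A"
  have "cmod (\<Sum>i<K. l2_inner (?Z i f) g - l2_inner (?Z i (trunc F f)) (trunc F g))
      \<le> (\<Sum>i<K. B * \<eta> * (l2_norm f + l2_norm g))"
    by (rule order_trans[OF norm_sum sum_mono], rule l2_inner_conj_op_trunc_diff_le[OF A(1) B hs F f g \<eta>])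
  also have "\<dots> = real K * (B * \<eta> * (l2_norm f + l2_norm g))" by simp
  finally have tails: "cmod (\<Sum>i<K. l2_inner (?Z i f) g - l2_inner (?Z i (trunc F f)) (trunc F g))
      \<le> real K * (B * \<eta> * (l2_norm f + l2_norm g))" .
  have "(\<Sum>i<K. l2_inner (?Z i f) g) = (\<Sum>i<K. l2_inner (?Z i (trunc F f)) (trunc F g))
      + (\<Sum>i<K. l2_inner (?Z i f) g - l2_inner (?Z i (trunc F f)) (trunc F g))"
    by (simp add: sum.distrib[symmetric])
  then have "cmod (\<Sum>i<K. l2_inner (?Z i f) g) \<le> cmod (\<Sum>i<K. l2_inner (?Z i (trunc F f)) (trunc F g))
      + cmod (\<Sum>i<K. l2_inner (?Z i f) g - l2_inner (?Z i (trunc F f)) (trunc F g))"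
    by (simp add: norm_triangle_ineq)
  then show ?thesis using sum_l2_inner_conj_op_trunc_le[OF A hs F orbits, where K=K and f=f and g=g] tails
    by linarith
qed

lemma conj_average_weakly_small:
  assumes A: "A \<in> bop (carrier G)" "right_invariant_op G A"
    and hs: "\<And>D i. hs D i \<in> carrier G"
    and orbits: "\<And>J. finite J \<Longrightarrow> J \<subseteq> carrier G \<Longrightarrow> \<exists>D0. \<forall>D\<ge>D0. \<forall>j\<in>J.
        (\<forall>i. op_entry A (inv (hs D i) \<otimes> j \<otimes> hs D i) \<one> = 0) \<or> inj (\<lambda>i. inv (hs D i) \<otimes> j \<otimes> hs D i)"
    and f: "f \<in> l2 (carrier G)" and g: "g \<in> l2 (carrier G)" and e: "\<epsilon> > 0"
  shows "eventually (\<lambda>n. \<forall>D\<ge>n. \<forall>K\<ge>n.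
    cmod (\<Sum>i<K. l2_inner (conj_op G (hs D i) A f) g) \<le> \<epsilon> * real K) sequentially"
proof -
  obtain B where B: "B \<ge> 0" "\<And>f. f \<in> l2 (carrier G) \<Longrightarrow> l2_norm (A f) \<le> B * l2_norm f"
    using bop_bound[OF A(1)] by blast
  define N where "N = l2_norm f + l2_norm g"
  have N: "N \<ge> 0" by (simp add: N_def l2_norm_nonneg)
  define X where "X = (B + 1) * (N + 1)"
  have X: "X > 0" unfolding X_def using B(1) N by (intro mult_pos_pos) linarith+
  define \<eta> where "\<eta> = \<epsilon> / 2 / X"
  have \<eta>: "\<eta> > 0" using e X by (simp add: \<eta>_def)
  have "B * N \<le> X" using B(1) N by (simp add: X_def algebra_simps)
  then have "\<eta> * (B * N) \<le> \<eta> * X" using \<eta> by (intro mult_left_mono) auto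
  also have "\<dots> = \<epsilon> / 2" using X by (simp add: \<eta>_def)
  finally have B\<eta>: "B * \<eta> * N \<le> \<epsilon> / 2" by (simp add: mult_ac)
  obtain F where F: "finite F" "F \<subseteq> carrier G"
    "l2_norm (\<lambda>x. f x - trunc F f x) < \<eta>" "l2_norm (\<lambda>x. g x - trunc F g x) < \<eta>"
    using obtain_trunc_approx[OF f g \<eta>] by blast
  define J where "J = (\<lambda>(a, b). a \<otimes> inv b) ` (F \<times> F)"
  have "finite J" "J \<subseteq> carrier G" using F(1,2) by (auto simp: J_def)
  from orbits[OF this] obtain D0 where D0: "\<And>D j. D \<ge> D0 \<Longrightarrow> j \<in> J \<Longrightarrow>
      (\<forall>i. op_entry A (inv (hs D i) \<otimes> j \<otimes> hs D i) \<one> = 0) \<or> inj (\<lambda>i. inv (hs D i) \<otimes> j \<otimes> hs D i)"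
    by blast
  define L where "L = (\<Sum>a\<in>F. \<Sum>b\<in>F. cmod (f b) * cmod (g a)) * l2_norm (A (delta \<one>))"
  define K0 where "K0 = nat \<lceil>(2 * L / \<epsilon>)\<^sup>2\<rceil>"
  have main: "cmod (\<Sum>i<K. l2_inner (conj_op G (hs D i) A f) g) \<le> \<epsilon> * real K"
    if D: "D \<ge> D0" and K: "K \<ge> K0" for D K
  proof -
    have "cmod (\<Sum>i<K. l2_inner (conj_op G (hs D i) A f) g) \<le> sqrt (real K) * L + real K * (B * \<eta> * N)"
      unfolding L_def N_def
    proof (rule sum_l2_inner_conj_op_le[OF A B hs F(1,2) f g less_imp_le[OF F(3)] less_imp_le[OF F(4)]])
      fix a b assume "a \<in> F" "b \<in> F"
      then have "a \<otimes> inv b \<in> J" by (force simp: J_def)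
      then show "(\<forall>i. op_entry A (inv (hs D i) \<otimes> (a \<otimes> inv b) \<otimes> hs D i) \<one> = 0)
          \<or> inj (\<lambda>i. inv (hs D i) \<otimes> (a \<otimes> inv b) \<otimes> hs D i)" using D0[OF D] by blast
    qed
    moreover have "sqrt (real K) * L \<le> \<epsilon> * real K / 2"
      using K unfolding K0_def by (intro sqrt_mult_le_half[OF e]) linarith
    moreover have "real K * (B * \<eta> * N) \<le> real K * (\<epsilon> / 2)" using B\<eta> by (rule mult_left_mono) simp
    moreover have "real K * (\<epsilon> / 2) = \<epsilon> * real K / 2" by simp
    ultimately show ?thesis by linarith
  qed
  then show ?thesis unfolding eventually_sequentially
  proof (intro exI[of _ "max D0 K0"] allI impI)
    fix n D K assume "max D0 K0 \<le> n" "n \<le> D" "n \<le> K"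
    then show "cmod (\<Sum>i<K. l2_inner (conj_op G (hs D i) A f) g) \<le> \<epsilon> * real K"
      using main by simp
  qed
qed

end

context group begin

lemma conj_op_add_scale_apply:
  assumes h: "h \<in> carrier G" and T: "T \<in> bop (carrier G)" and S: "S \<in> bop (carrier G)"
    and f: "f \<in> l2 (carrier G)"
  shows "conj_op G h (op_add T (op_scale c S)) f = (\<lambda>x. conj_op G h T f x + c * conj_op G h S f x)"
proof -
  let ?f = "lreg G (inv h) f"
  have f': "?f \<in> l2 (carrier G)" using lreg_l2[OF inv_closed[OF h] f] by blast
  have "conj_op G h (op_add T (op_scale c S)) f = lreg G h (\<lambda>x. T ?f x + c * S ?f x)"
    by (simp add: conj_op_def op_add_def op_scale_def)
  also have "\<dots> = (\<lambda>x. lreg G h (T ?f) x + c * lreg G h (S ?f) x)"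
    using bop_add[OF lreg_bop[OF h] bop_l2[OF T f'] l2_scale[OF bop_l2[OF S f']]]
      bop_scale[OF lreg_bop[OF h] bop_l2[OF S f']] by simp
  finally show ?thesis by (simp add: conj_op_def)
qed

lemma l2_inner_lreg_minus_conj_average:
  assumes z: "z \<in> bop (carrier G)" and k: "k \<in> carrier G" and c: "c \<noteq> 0" and K: "K \<noteq> 0"
    and hs: "\<And>i. hs i \<in> carrier G" and fixes_k: "\<And>i. hs i \<otimes> k \<otimes> inv (hs i) = k"
    and f: "f \<in> l2 (carrier G)" and g: "g \<in> l2 (carrier G)"
  defines "S \<equiv> op_scale (1 / (of_nat K * c))
    (op_sum (carrier G) K (\<lambda>i. conj_op G (hs i) (op_add z (op_scale c (lreg G k)))))"
  shows "l2_inner (\<lambda>x. lreg G k f x - S f x) g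
    = - (1 / (of_nat K * c)) * (\<Sum>i<K. l2_inner (conj_op G (hs i) z f) g)"
proof -
  let ?u = "lreg G k"
  have conj_y: "conj_op G (hs i) (op_add z (op_scale c ?u)) f = (\<lambda>x. conj_op G (hs i) z f x + c * ?u f x)" for i
    unfolding conj_op_add_scale_apply[OF hs z lreg_bop[OF k] f] conj_op_lreg[OF hs k] fixes_k ..
  have "S f x = (1 / (of_nat K * c)) * (\<Sum>i<K. conj_op G (hs i) z f x) + ?u f x" for x
  proof -
    have "S f x = (1 / (of_nat K * c)) * (\<Sum>i<K. conj_op G (hs i) z f x + c * ?u f x)"
      by (simp add: S_def op_scale_def op_sum_apply conj_y)
    also have "\<dots> = (1 / (of_nat K * c)) * (\<Sum>i<K. conj_op G (hs i) z f x)
        + (1 / (of_nat K * c)) * (of_nat K * c * ?u f x)"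
      by (simp add: sum.distrib distrib_left)
    also have "(1 / (of_nat K * c)) * (of_nat K * c * ?u f x) = ?u f x" using c K by simp
    finally show ?thesis .
  qed
  then have "(\<lambda>x. ?u f x - S f x) = (\<lambda>x. (- (1 / (of_nat K * c))) * (\<Sum>i<K. 1 * conj_op G (hs i) z f x))"
    by simp
  then show ?thesis
    by (simp only: l2_inner_scale_left l2_inner_sum_left[OF g finite_lessThan bop_l2[OF conj_op_bop[OF hs z] f]])
      simp
qed

text \<open>The averages of the conjugates of y = z + c u_k by elements fixing k are u_k plus c^-1 times
  the averages of the conjugates of z, which tend weakly to 0; weak closedness of M gives u_k \<in> M.\<close>
lemma lreg_in_vNa_by_averaging:
  fixes hs :: "nat \<Rightarrow> nat \<Rightarrow> 'a"
  assumes M: "vNa (carrier G) M" and inv: "G_invariant G M"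
    and z: "z \<in> bop (carrier G)" "right_invariant_op G z"
    and k: "k \<in> carrier G" and c: "c \<noteq> 0" and y: "op_add z (op_scale c (lreg G k)) \<in> M"
    and hs: "\<And>D i. hs D i \<in> carrier G" and fixes_k: "\<And>D i. hs D i \<otimes> k \<otimes> inv (hs D i) = k"
    and orbits: "\<And>J. finite J \<Longrightarrow> J \<subseteq> carrier G \<Longrightarrow> \<exists>D0. \<forall>D\<ge>D0. \<forall>j\<in>J.
        (\<forall>i. op_entry z (inv (hs D i) \<otimes> j \<otimes> hs D i) \<one> = 0) \<or> inj (\<lambda>i. inv (hs D i) \<otimes> j \<otimes> hs D i)"
  shows "lreg G k \<in> M"
proof -
  have "\<exists>S\<in>M. \<forall>(f, g)\<in>F. cmod (l2_inner (\<lambda>x. lreg G k f x - S f x) g) < \<epsilon>"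
    if F: "finite F" "F \<subseteq> l2 (carrier G) \<times> l2 (carrier G)" and e: "\<epsilon> > 0" for F \<epsilon>
  proof -
    define \<epsilon>' where "\<epsilon>' = \<epsilon> * cmod c / 2"
    have e': "\<epsilon>' > 0" using e c by (simp add: \<epsilon>'_def)
    have "eventually (\<lambda>n. \<forall>p\<in>F. \<forall>D\<ge>n. \<forall>K\<ge>n.
        cmod (\<Sum>i<K. l2_inner (conj_op G (hs D i) z (fst p)) (snd p)) \<le> \<epsilon>' * real K) sequentially"
      using F by (intro eventually_ball_finite ballI conj_average_weakly_small[OF z hs orbits _ _ e']) auto
    then obtain n where n: "\<forall>p\<in>F. \<forall>D\<ge>n. \<forall>K\<ge>n.
        cmod (\<Sum>i<K. l2_inner (conj_op G (hs D i) z (fst p)) (snd p)) \<le> \<epsilon>' * real K"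
      unfolding eventually_sequentially by blast
    define K where "K = Suc n"
    have K: "K \<noteq> 0" by (simp add: K_def)
    define S where "S = op_scale (1 / (of_nat K * c))
      (op_sum (carrier G) K (\<lambda>i. conj_op G (hs n i) (op_add z (op_scale c (lreg G k)))))"
    have "S \<in> M"
      using M G_invariant_conj_op[OF inv hs y] unfolding S_def by (simp add: op_sum_in_vNa vNa_def)
    moreover have "cmod (l2_inner (\<lambda>x. lreg G k f x - S f x) g) < \<epsilon>" if fg: "(f, g) \<in> F" for f g
    proof -
      have f: "f \<in> l2 (carrier G)" and g: "g \<in> l2 (carrier G)" using fg F(2) by auto
      have "cmod (l2_inner (\<lambda>x. lreg G k f x - S f x) g)
          = cmod (\<Sum>i<K. l2_inner (conj_op G (hs n i) z f) g) / (real K * cmod c)"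
        unfolding S_def l2_inner_lreg_minus_conj_average[OF z(1) k c K hs fixes_k f g]
        by (simp add: norm_mult norm_divide)
      also have "\<dots> \<le> \<epsilon>' * real K / (real K * cmod c)"
      proof (rule divide_right_mono)
        show "cmod (\<Sum>i<K. l2_inner (conj_op G (hs n i) z f) g) \<le> \<epsilon>' * real K"
          using bspec[OF n fg] unfolding K_def by (simp del: sum.lessThan_Suc of_nat_Suc)
      qed simp
      also have "\<dots> = \<epsilon> / 2" using c K by (simp add: \<epsilon>'_def field_simps)
      finally show ?thesis using e by simp
    qed
    ultimately show ?thesis by blast
  qed
  then show ?thesis using M lreg_bop[OF k] unfolding vNa_def wot_closed_def by blast
qed

end

section \<open>Invariant subalgebras of L(G)\<close>

interpretation Gsd: group Gsd by (rule group_Gsd)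

abbreviation same_GL :: "mat2 \<times> vec2 \<Rightarrow> mat2 \<times> vec2 \<Rightarrow> bool" where
  "same_GL a b \<equiv> fst a = fst b"

lemma Gsd_mult_fst: "fst (p \<otimes>\<^bsub>Gsd\<^esub> q) = mmul (fst p) (fst q)"
  by (cases p, cases q) (simp add: Gsd_mult)

lemma zero_Finf: "(\<lambda>_. False) \<in> Finf"
  by (simp add: Finf_def)

lemma conv_ops_same_GL_vNa: "vNa (carrier Gsd) (conv_ops Gsd same_GL)"
  by (rule Gsd.conv_ops_vNa) auto

lemma groupVN_Nsd_subset_conv_ops: "groupVN Gsd Nsd \<subseteq> conv_ops Gsd same_GL"
  by (rule Gsd.groupVN_subset_conv_ops) (auto simp: Nsd_def Gsd_mult_fst Gsd_carrier idm_GLinf)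

lemma Gsd_involution:
  assumes g: "g \<in> GLinf" and gg: "mmul g g = idm"
  shows "(g, (\<lambda>_. False)) \<in> carrier Gsd"
    and "inv\<^bsub>Gsd\<^esub> (g, (\<lambda>_. False)) = (g, (\<lambda>_. False))"
    and "(g, (\<lambda>_. False)) \<otimes>\<^bsub>Gsd\<^esub> (g, (\<lambda>_. False)) = \<one>\<^bsub>Gsd\<^esub>"
    and "(g, (\<lambda>_. False)) \<otimes>\<^bsub>Gsd\<^esub> (idm, w) \<otimes>\<^bsub>Gsd\<^esub> (g, (\<lambda>_. False)) = (idm, mvec g w)"
proof -
  show c: "(g, (\<lambda>_. False)) \<in> carrier Gsd" using g by (simp add: Gsd_carrier zero_Finf)
  show s: "(g, (\<lambda>_. False)) \<otimes>\<^bsub>Gsd\<^esub> (g, (\<lambda>_. False)) = \<one>\<^bsub>Gsd\<^esub>"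
    using gg by (simp add: Gsd_mult Gsd_one)
  show "inv\<^bsub>Gsd\<^esub> (g, (\<lambda>_. False)) = (g, (\<lambda>_. False))" by (rule Gsd.inv_equality[OF s c c])
  show "(g, (\<lambda>_. False)) \<otimes>\<^bsub>Gsd\<^esub> (idm, w) \<otimes>\<^bsub>Gsd\<^esub> (g, (\<lambda>_. False)) = (idm, mvec g w)"
    using gg by (simp add: Gsd_mult)
qed

lemma Gsd_conj_fst_idm:
  assumes h: "h \<in> carrier Gsd" and j: "j \<in> carrier Gsd" and hh: "h \<otimes>\<^bsub>Gsd\<^esub> h = \<one>\<^bsub>Gsd\<^esub>"
    and "fst (h \<otimes>\<^bsub>Gsd\<^esub> j \<otimes>\<^bsub>Gsd\<^esub> h) = idm"
  shows "fst j = idm"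
proof -
  have "j = (h \<otimes>\<^bsub>Gsd\<^esub> h) \<otimes>\<^bsub>Gsd\<^esub> j \<otimes>\<^bsub>Gsd\<^esub> (h \<otimes>\<^bsub>Gsd\<^esub> h)" using hh j by simp
  also have "\<dots> = h \<otimes>\<^bsub>Gsd\<^esub> (h \<otimes>\<^bsub>Gsd\<^esub> j \<otimes>\<^bsub>Gsd\<^esub> h) \<otimes>\<^bsub>Gsd\<^esub> h" using h j by (simp add: Gsd.m_assoc)
  finally have "fst j = mmul (mmul (fst h) idm) (fst h)" using assms(4) by (metis Gsd_mult_fst)
  also have "\<dots> = fst (h \<otimes>\<^bsub>Gsd\<^esub> h)" by (simp add: Gsd_mult_fst)
  finally show ?thesis using hh by (simp add: Gsd_one)
qed

definition block_elem :: "vec2 \<Rightarrow> nat \<Rightarrow> nat \<Rightarrow> nat \<Rightarrow> mat2 \<times> vec2" where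
  "block_elem v r D i = (block_invol v r (D + Suc r) i, (\<lambda>_. False))"

lemma block_elem:
  shows "block_elem v r D i \<in> carrier Gsd"
    and "inv\<^bsub>Gsd\<^esub> (block_elem v r D i) = block_elem v r D i"
    and "block_elem v r D i \<otimes>\<^bsub>Gsd\<^esub> block_elem v r D i = \<one>\<^bsub>Gsd\<^esub>"
    and "block_elem v r D i \<otimes>\<^bsub>Gsd\<^esub> (idm, w) \<otimes>\<^bsub>Gsd\<^esub> block_elem v r D i
      = (idm, mvec (block_invol v r (D + Suc r) i) w)"
  using Gsd_involution[OF block_invol_GLinf[of r "D + Suc r"]] by (simp_all add: block_elem_def)

lemma block_elem_fixes:
  assumes "v r"
  shows "block_elem v r D i \<otimes>\<^bsub>Gsd\<^esub> (idm, v) \<otimes>\<^bsub>Gsd\<^esub> inv\<^bsub>Gsd\<^esub> (block_elem v r D i) = (idm, v)"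
  using assms by (simp add: block_elem block_invol_fixes)

lemma block_elem_conj_orbits:
  assumes v: "v \<in> Finf" "v r" and J: "finite J" "J \<subseteq> carrier Gsd"
  shows "\<exists>D0. \<forall>D\<ge>D0. \<forall>j\<in>J. fst j = idm \<longrightarrow>
    j = \<one>\<^bsub>Gsd\<^esub> \<or> j = (idm, v) \<or> inj (\<lambda>i. block_elem v r D i \<otimes>\<^bsub>Gsd\<^esub> j \<otimes>\<^bsub>Gsd\<^esub> block_elem v r D i)"
proof -
  let ?S = "(\<Union>j\<in>J. {t. snd j t}) \<union> {t. v t}"
  have "finite {t. snd j t}" if "j \<in> J" for j
    using that J(2) by (cases j) (auto simp: Gsd_carrier Finf_def)
  then have "finite ?S" using J(1) v(1) by (simp add: Finf_def)
  then obtain D0 where D0: "\<forall>t\<in>?S. t < D0" using finite_nat_set_iff_bounded by blast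
  have "j = \<one>\<^bsub>Gsd\<^esub> \<or> j = (idm, v) \<or> inj (\<lambda>i. block_elem v r D i \<otimes>\<^bsub>Gsd\<^esub> j \<otimes>\<^bsub>Gsd\<^esub> block_elem v r D i)"
    if D: "D \<ge> D0" and j: "j \<in> J" "fst j = idm" for D j
  proof -
    obtain w where jw: "j = (idm, w)" using j(2) by (cases j) simp
    have small: "\<not> v t" "\<not> w t" if "t \<ge> D + Suc r" for t
    proof -
      have "t \<notin> ?S" using D0 D that by (meson le_add1 le_trans not_less)
      then show "\<not> v t" "\<not> w t" using j(1) jw by auto
    qed
    consider "w = (\<lambda>_. False)" | "w = v" | "w \<noteq> (\<lambda>_. False)" "w \<noteq> v" by blast
    then show ?thesis
    proof cases
      case 1
      then show ?thesis using jw by (simp add: Gsd_one)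
    next
      case 2
      then show ?thesis using jw by simp
    next
      case 3
      have "inj (\<lambda>i. mvec (block_invol v r (D + Suc r) i) w)"
        by (rule inj_block_invol[OF _ v(2) small 3]) simp
      then show ?thesis using jw by (simp add: block_elem(4) inj_def)
    qed
  qed
  then show ?thesis by blast
qed

lemma Nsd_entry_nonzero:
  assumes x: "x \<in> conv_ops Gsd same_GL" and ns: "x \<notin> scalars (carrier Gsd)"
  obtains v where "v \<in> Finf" "v \<noteq> (\<lambda>_. False)" "op_entry x (idm, v) \<one>\<^bsub>Gsd\<^esub> \<noteq> 0"
proof -
  obtain k where k: "k \<in> carrier Gsd" "k \<noteq> \<one>\<^bsub>Gsd\<^esub>" "op_entry x k \<one>\<^bsub>Gsd\<^esub> \<noteq> 0"
    using Gsd.right_invariant_scalar[OF conv_ops_bop[OF x] conv_ops_right_invariant[OF x]] ns by blast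
  have "fst k = idm" using conv_ops_support[OF x, of k "\<one>\<^bsub>Gsd\<^esub>"] k(3) by (auto simp: Gsd_one)
  then have "k = (idm, snd k)" by (cases k) simp
  then show ?thesis using that k by (auto simp: Gsd_carrier Gsd_one)
qed

lemma block_elem_conj_entries:
  assumes z: "z \<in> conv_ops Gsd same_GL" and z_one: "op_entry z \<one>\<^bsub>Gsd\<^esub> \<one>\<^bsub>Gsd\<^esub> = 0"
    and z_v: "op_entry z (idm, v) \<one>\<^bsub>Gsd\<^esub> = 0" and v: "v \<in> Finf" "v r"
    and J: "finite J" "J \<subseteq> carrier Gsd"
  shows "\<exists>D0. \<forall>D\<ge>D0. \<forall>j\<in>J.
    (\<forall>i. op_entry z (inv\<^bsub>Gsd\<^esub> (block_elem v r D i) \<otimes>\<^bsub>Gsd\<^esub> j \<otimes>\<^bsub>Gsd\<^esub> block_elem v r D i) \<one>\<^bsub>Gsd\<^esub> = 0)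
    \<or> inj (\<lambda>i. inv\<^bsub>Gsd\<^esub> (block_elem v r D i) \<otimes>\<^bsub>Gsd\<^esub> j \<otimes>\<^bsub>Gsd\<^esub> block_elem v r D i)"
proof -
  obtain D0 where D0: "\<And>D j. D \<ge> D0 \<Longrightarrow> j \<in> J \<Longrightarrow> fst j = idm \<Longrightarrow>
      j = \<one>\<^bsub>Gsd\<^esub> \<or> j = (idm, v) \<or> inj (\<lambda>i. block_elem v r D i \<otimes>\<^bsub>Gsd\<^esub> j \<otimes>\<^bsub>Gsd\<^esub> block_elem v r D i)"
    using block_elem_conj_orbits[OF v J] by blast
  have "(\<forall>i. op_entry z (block_elem v r D i \<otimes>\<^bsub>Gsd\<^esub> j \<otimes>\<^bsub>Gsd\<^esub> block_elem v r D i) \<one>\<^bsub>Gsd\<^esub> = 0)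
      \<or> inj (\<lambda>i. block_elem v r D i \<otimes>\<^bsub>Gsd\<^esub> j \<otimes>\<^bsub>Gsd\<^esub> block_elem v r D i)"
    if D: "D \<ge> D0" and j: "j \<in> J" for D j
  proof (cases "fst j = idm")
    case False
    then have "fst (block_elem v r D i \<otimes>\<^bsub>Gsd\<^esub> j \<otimes>\<^bsub>Gsd\<^esub> block_elem v r D i) \<noteq> idm" for i
      using Gsd_conj_fst_idm[OF block_elem(1) _ block_elem(3)] j J(2) by blast
    then show ?thesis using conv_ops_support[OF z] by (simp add: Gsd_one)
  next
    case True
    then show ?thesis using D0[OF D j True] z_one z_v block_elem(3)[of v r D] block_elem_fixes[of v r, OF v(2)]
      by (auto simp: block_elem(1,2))
  qed
  then show ?thesis unfolding block_elem(2) by blast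
qed

lemma lreg_Nsd_in_M_of_entry:
  assumes M: "vNa (carrier Gsd) M" and inv: "G_invariant Gsd M"
    and x: "x \<in> M" "x \<in> conv_ops Gsd same_GL"
    and v: "v \<in> Finf" "v \<noteq> (\<lambda>_. False)" and ck: "op_entry x (idm, v) \<one>\<^bsub>Gsd\<^esub> \<noteq> 0"
  shows "lreg Gsd (idm, v) \<in> M"
proof -
  let ?e = "\<one>\<^bsub>Gsd\<^esub>" and ?k = "(idm, v)"
  define ce where "ce = op_entry x ?e ?e"
  define ck where "ck = op_entry x ?k ?e"
  have k: "?k \<in> carrier Gsd" "?k \<in> Nsd" "?k \<noteq> ?e"
    using v by (auto simp: Gsd_carrier idm_GLinf Nsd_def Gsd_one)
  have uk: "lreg Gsd ?k \<in> conv_ops Gsd same_GL"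
    using groupVN_Nsd_subset_conv_ops lreg_in_groupVN[OF k(2)] by blast
  have one: "idop (carrier Gsd) \<in> conv_ops Gsd same_GL"
    using conv_ops_same_GL_vNa by (simp add: vNa_def)
  define y where "y = op_add x (op_scale (- ce) (idop (carrier Gsd)))"
  define z where "z = op_add y (op_scale (- ck) (lreg Gsd ?k))"
  have "y \<in> M" using M x(1) unfolding y_def vNa_def by blast
  moreover have "y = op_add z (op_scale ck (lreg Gsd ?k))"
    by (simp add: z_def op_add_def op_scale_def fun_eq_iff)
  ultimately have y: "op_add z (op_scale ck (lreg Gsd ?k)) \<in> M" by simp
  have z: "z \<in> conv_ops Gsd same_GL"
    unfolding z_def y_def by (intro op_add_conv_ops op_scale_conv_ops x(2) one uk)
  have z_entry: "op_entry z j ?e = op_entry x j ?e - ce * delta ?e j - ck * delta ?k j" for j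
    using Gsd.lreg_delta[OF k(1) Gsd.one_closed] k(1)
    by (simp add: z_def y_def op_add_def op_scale_def op_entry_def idop_def delta_l2[OF Gsd.one_closed])
  have z_e: "op_entry z ?e ?e = 0" and z_k: "op_entry z ?k ?e = 0"
    using k(3) by (simp_all add: z_entry ce_def ck_def delta_def)
  obtain r where r: "v r" using v(2) by auto
  show ?thesis
  proof (rule Gsd.lreg_in_vNa_by_averaging[OF M inv conv_ops_bop[OF z] conv_ops_right_invariant[OF z]
        k(1) ck[folded ck_def] y])
    show "block_elem v r D i \<in> carrier Gsd" for D i by (rule block_elem)
    show "block_elem v r D i \<otimes>\<^bsub>Gsd\<^esub> ?k \<otimes>\<^bsub>Gsd\<^esub> inv\<^bsub>Gsd\<^esub> (block_elem v r D i) = ?k" for D i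
      by (rule block_elem_fixes[of v r, OF r])
  qed (rule block_elem_conj_entries[OF z z_e z_k v(1) r])
qed

lemma Nsd_lreg_in_M:
  assumes M: "vNa (carrier Gsd) M" and inv: "G_invariant Gsd M"
    and v: "v \<in> Finf" "v \<noteq> (\<lambda>_. False)" and uv: "lreg Gsd (idm, v) \<in> M"
  shows "lreg Gsd ` Nsd \<subseteq> M"
proof
  fix u assume "u \<in> lreg Gsd ` Nsd"
  then obtain w where u: "u = lreg Gsd (idm, w)" and w: "w \<in> Finf" by (auto simp: Nsd_def)
  show "u \<in> M"
  proof (cases "w = (\<lambda>_. False)")
    case True
    then show ?thesis using M u by (simp add: Gsd_one[symmetric] Gsd.lreg_one vNa_def)
  next
    case False
    obtain g where g: "g \<in> GLinf" "mmul g g = idm" "mvec g v = w"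
      using GLinf_involution_transitive[OF v w False] by blast
    let ?h = "(g, (\<lambda>_::nat. False))"
    have "(idm, v) \<in> carrier Gsd" using v by (simp add: Gsd_carrier idm_GLinf)
    then have "conj_op Gsd ?h (lreg Gsd (idm, v)) = lreg Gsd (idm, w)"
      using Gsd_involution[OF g(1,2)] g(3) by (simp add: Gsd.conj_op_lreg)
    then show ?thesis using Gsd.G_invariant_conj_op[OF inv Gsd_involution(1)[OF g(1,2)] uv] u by simp
  qed
qed

theorem proposition4p10:
  assumes "vNa (carrier Gsd) M"
    and "M \<subseteq> groupVN Gsd (carrier Gsd)"
    and "G_invariant Gsd M"
  shows "groupVN Gsd Nsd \<subseteq> M \<or> M \<inter> groupVN Gsd Nsd = scalars (carrier Gsd)"
proof (cases "lreg Gsd ` Nsd \<subseteq> M")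
  case True
  then show ?thesis using assms(1) unfolding groupVN_def vN_gen_def by blast
next
  case False
  have "x \<in> scalars (carrier Gsd)" if x: "x \<in> M" "x \<in> groupVN Gsd Nsd" for x
  proof (rule ccontr)
    assume ns: "x \<notin> scalars (carrier Gsd)"
    have xC: "x \<in> conv_ops Gsd same_GL" using x(2) groupVN_Nsd_subset_conv_ops by blast
    obtain v where v: "v \<in> Finf" "v \<noteq> (\<lambda>_. False)" "op_entry x (idm, v) \<one>\<^bsub>Gsd\<^esub> \<noteq> 0"
      using Nsd_entry_nonzero[OF xC ns] by blast
    have "lreg Gsd (idm, v) \<in> M" by (rule lreg_Nsd_in_M_of_entry[OF assms(1,3) x(1) xC v])
    then show False using Nsd_lreg_in_M[OF assms(1,3) v(1,2)] False by blast
  qed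
  moreover have "scalars (carrier Gsd) \<subseteq> M \<inter> groupVN Gsd Nsd"
    using assms(1) unfolding scalars_def groupVN_def vN_gen_def vNa_def by blast
  ultimately show ?thesis by blast
qed

end
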